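(* Let $(X_n)$ be generated by the $\lambda$-SAGA algorithm (defined in the context) with a fixed $\lambda\in[0,1]$ and a positive deterministic step sequence $(\gamma_n)$ decreasing to $0$ with $\sum_{n\ge1}\gamma_n=+\infty$ and $\sum_{n\ge1}\gamma_n^2<+\infty$. Assume: (A1) $f$ is continuously differentiable and there is a unique $x^*\in\mathbb R^d$ with $\nabla f(x^* )=0$; (A2) for all $x\neq x^*$, $\langle x-x^*,\nabla f(x)\rangle>0$; (A3) there is $L>0$ such that for all $x\in\mathbb R^d$, $\frac1N\sum_{k=1}^N\|\nabla f_k(x)-\nabla f_k(x^* )\|^2\le L\|x-x^*\|^2$. Then $\lim_{n\to\infty}X_n=x^*$ almost surely and $\lim_{n\to\infty}f(X_n)=f(x^* )$ almost surely.
   Context: Let $N,d\ge1$ be integers, $f_1,\dots,f_N:\mathbb R^d\to\mathbb R$ differentiable, and $f=\frac1N\sum_{k=1}^N f_k$. The $\lambda$-SAGA algorithm with parameter $\lambda\in[0,1]$ and positive deterministic steps $(\gamma_n)_{n\ge1}$: let $X_0,X_1$ be square-integrable random vectors in $\mathbb R^d$ and $(U_n)_{n\ge2}$ i.i.d. uniform on $\{1,\dots,N\}$, independent of $(X_0,X_1)$. Set $g_{1,k}=\nabla f_k(X_0)$ for $k=1,\dots,N$ and for $n\ge1$: $X_{n+1}=X_n-\gamma_n\Big(\nabla f_{U_{n+1}}(X_n)-\lambda\big(g_{n,U_{n+1}}-\frac1N\sum_{k=1}^N g_{n,k}\big)\Big)$, and $g_{n+1,k}=\nabla f_k(X_n)$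 if $U_{n+1}=k$, $g_{n+1,k}=g_{n,k}$ otherwise. *)

theory Defs
  imports "HOL-Probability.Probability"
begin

definition avg_fun :: "nat \<Rightarrow> (nat \<Rightarrow> 'v \<Rightarrow> 'b::real_vector) \<Rightarrow> 'v \<Rightarrow> 'b" where
  "avg_fun N F x = (1 / real N) *\<^sub>R (\<Sum>k = 1..N. F k x)"

text \<open>lambda-SAGA state (X_n, g_n) for n >= 1, stored at index n-1.
  G k is the gradient of f_k, lam the parameter, gam the steps,
  x0 x1 the initial points, u the index sequence (u n = U_n, n >= 2).\<close>
primrec saga_state ::
  "nat \<Rightarrow> (nat \<Rightarrow> 'v \<Rightarrow> 'v::real_vector) \<Rightarrow> real \<Rightarrow> (nat \<Rightarrow> real) \<Rightarrow> 'v \<Rightarrow> 'v \<Rightarrow> (nat \<Rightarrow> nat)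
     \<Rightarrow> nat \<Rightarrow> 'v \<times> (nat \<Rightarrow> 'v)" where
  "saga_state N G lam gam x0 x1 u 0 = (x1, (\<lambda>k. G k x0))"
| "saga_state N G lam gam x0 x1 u (Suc m) =
     (let (x, g) = saga_state N G lam gam x0 x1 u m;
          n = Suc m;
          k = u (Suc n)
      in (x - gam n *\<^sub>R (G k x - lam *\<^sub>R (g k - avg_fun N (\<lambda>j _. g j) x)),
          g(k := G k x)))"

definition saga_X ::
  "nat \<Rightarrow> (nat \<Rightarrow> 'v \<Rightarrow> 'v::real_vector) \<Rightarrow> real \<Rightarrow> (nat \<Rightarrow> real) \<Rightarrow> 'v \<Rightarrow> 'v \<Rightarrow> (nat \<Rightarrow> nat)
     \<Rightarrow> nat \<Rightarrow> 'v" where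
  "saga_X N G lam gam x0 x1 u n =
     (if n = 0 then x0 else fst (saga_state N G lam gam x0 x1 u (n - 1)))"

end

theory Submission
  imports Defs
begin

text \<open>
  The proof is a Lyapunov-function argument. With \<open>x\<^sup>*\<close> the critical point and \<open>g\<^sub>n\<close> the
  stored gradients, \<open>V\<^sub>n = \<parallel>X\<^sub>n - x\<^sup>*\<parallel>\<^sup>2 + 3 \<gamma>\<^sub>n\<^sup>2 \<Sum>\<^sub>k \<parallel>g\<^sub>n\<^sub>,\<^sub>k - \<nabla>f\<^sub>k(x\<^sup>*)\<parallel>\<^sup>2\<close> satisfies, by (A3),
  \<open>E[V\<^sub>n\<^sub>+\<^sub>1 | past] \<le> (1 + 6 L \<gamma>\<^sub>n\<^sup>2) V\<^sub>n + 3 \<sigma>\<^sup>2 \<gamma>\<^sub>n\<^sup>2 - 2 \<gamma>\<^sub>n \<langle>X\<^sub>n - x\<^sup>*, \<nabla>f(X\<^sub>n)\<rangle>\<close>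
  with \<open>\<sigma>\<^sup>2 = (1/N) \<Sum>\<^sub>k \<parallel>\<nabla>f\<^sub>k(x\<^sup>*)\<parallel>\<^sup>2\<close>.
  Since \<open>\<Sum> \<gamma>\<^sub>n\<^sup>2 < \<infinity>\<close>, the Robbins--Siegmund theorem shows that almost surely \<open>V\<^sub>n\<close> converges
  and the drift terms are summable. The memory term vanishes because the stored gradients
  are gradients at bounded past iterates, so \<open>\<parallel>X\<^sub>n - x\<^sup>*\<parallel>\<^sup>2\<close> converges to some \<open>\<ell>\<close>; if
  \<open>\<ell> > 0\<close>, the drift is bounded below on the compact annulus the iterates end up in (A1, A2),
  contradicting \<open>\<Sum> \<gamma>\<^sub>n = \<infinity>\<close>.

  Robbins--Siegmund itself rests on Kolmogorov's maximal inequality (martingales with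
  square-summable increments converge), applied to the Doob decomposition of bounded
  supermartingales and then, by truncation, to nonnegative ones. Conditional expectations
  given the past are averages over the next uniformly drawn index.
\<close>

section \<open>Deterministic convergence lemmas\<close>

lemma power2_le_if_abs_le: "\<bar>x\<bar> \<le> C \<Longrightarrow> x\<^sup>2 \<le> C\<^sup>2" for x C :: real
  using power_mono[of "\<bar>x\<bar>" C 2] by simp

lemma sum_first_hit:
  fixes n :: nat
  shows "(\<Sum>j\<in>{m<..n}. of_bool (P j \<and> (\<forall>i\<in>{m<..<j}. \<not> P i)) :: real) = of_bool (\<exists>j\<in>{m<..n}. P j)"
proof (induction n)
  case (Suc n)
  show ?case
  proof (cases "m < Suc n")
    case True
    then have "{m<..Suc n} = insert (Suc n) {m<..n}" "{m<..<Suc n} = {m<..n}"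
      by auto
    then show ?thesis
      using Suc by auto
  qed simp
qed simp

lemma summable_if_tails_small:
  fixes a :: "nat \<Rightarrow> real"
  assumes "\<And>e. e > 0 \<Longrightarrow> \<exists>m. \<forall>j\<ge>m. \<bar>\<Sum>k\<in>{m..<j}. a k\<bar> < e"
  shows "summable a"
proof (subst summable_Cauchy, intro allI impI)
  fix e :: real assume "e > 0"
  then obtain m where m: "\<And>j. j \<ge> m \<Longrightarrow> \<bar>\<Sum>k\<in>{m..<j}. a k\<bar> < e / 2"
    using assms[of "e / 2"] by auto
  have "norm (\<Sum>k\<in>{p..<q}. a k) < e" if "p \<ge> m" for p q
  proof (cases "p \<le> q")
    case True
    have "(\<Sum>k\<in>{m..<p}. a k) + (\<Sum>k\<in>{p..<q}. a k) = (\<Sum>k\<in>{m..<q}. a k)"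
      using \<open>p \<ge> m\<close> True by (rule sum.atLeastLessThan_concat)
    moreover have "\<bar>\<Sum>k\<in>{m..<p}. a k\<bar> < e / 2" "\<bar>\<Sum>k\<in>{m..<q}. a k\<bar> < e / 2"
      using m \<open>p \<ge> m\<close> True by auto
    ultimately show ?thesis
      by (simp only: real_norm_def)
  qed (use \<open>e > 0\<close> in simp)
  then show "\<exists>m. \<forall>p\<ge>m. \<forall>q. norm (\<Sum>k\<in>{p..<q}. a k) < e"
    by blast
qed

lemma convergent_if_summable_compensated_increments:
  fixes W Q :: "nat \<Rightarrow> real"
  assumes W_nonneg: "\<And>n. 0 \<le> W n" and W_le: "\<And>n. W n \<le> C" and Q_le: "\<And>n. Q n \<le> W n"
    and summable: "summable (\<lambda>k. W (Suc k) - Q k)"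
  shows "convergent W"
proof -
  define P where "P n = (\<Sum>k<n. W (Suc k) - Q k)" for n
  define A where "A n = (\<Sum>k<n. W k - Q k)" for n
  have W_eq: "W n = W 0 + P n - A n" for n
    using sum_lessThan_telescope[of W n] by (simp add: P_def A_def sum_subtractf)
  have "convergent P"
    using summable unfolding P_def by (simp add: summable_iff_convergent)
  then obtain K where K: "\<And>n. \<bar>P n\<bar> \<le> K"
    using convergent_imp_Bseq[OF \<open>convergent P\<close>] by (auto simp: Bseq_def)
  have "Bseq A"
  proof (rule BseqI'[where K="C + K"])
    fix n
    have "0 \<le> A n"
      unfolding A_def using Q_le by (intro sum_nonneg) (simp add: diff_ge_0_iff_ge)
    then show "norm (A n) \<le> C + K"
      using W_eq[of n] W_nonneg[of n] W_le[of 0] K[of n] by simp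
  qed
  moreover have "incseq A"
    unfolding A_def using Q_le by (intro incseq_SucI) simp
  ultimately have "convergent A"
    by (simp add: Bseq_monoseq_convergent monoseq_iff)
  then have "convergent (\<lambda>n. W 0 + P n - A n)"
    using \<open>convergent P\<close> by (intro convergent_diff convergent_add convergent_const)
  then show ?thesis
    unfolding W_eq[symmetric] .
qed

lemma prod_one_plus_bounds:
  fixes a :: "nat \<Rightarrow> real"
  assumes "\<And>k. 0 \<le> a k" "summable a"
  shows "1 \<le> (\<Prod>j<k. 1 + a j)" "(\<Prod>j<k. 1 + a j) \<le> exp (suminf a)"
proof -
  show "1 \<le> (\<Prod>j<k. 1 + a j)"
    using assms(1) by (intro prod_ge_1) (simp add: add_increasing2)
  have "(\<Prod>j<k. 1 + a j) \<le> (\<Prod>j<k. exp (a j))"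
    using assms(1) by (intro prod_mono) (auto simp: add_nonneg_nonneg)
  also have "\<dots> \<le> exp (suminf a)"
    using sum_le_suminf[OF assms(2), of "{..<k}"] assms(1) by (auto simp: exp_sum[symmetric])
  finally show "(\<Prod>j<k. 1 + a j) \<le> exp (suminf a)" .
qed

lemma convergent_prod_one_plus:
  fixes a :: "nat \<Rightarrow> real"
  assumes "\<And>k. 0 \<le> a k" "summable a"
  shows "convergent (\<lambda>k. \<Prod>j<k. 1 + a j)"
proof (intro Bseq_monoseq_convergent BseqI'[where K="exp (suminf a)"] mono_SucI1 allI)
  show "norm (\<Prod>j<k. 1 + a j) \<le> exp (suminf a)" for k
    using prod_one_plus_bounds[OF assms, of k] by simp
  show "(\<Prod>j<k. 1 + a j) \<le> (\<Prod>j<Suc k. 1 + a j)" for k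
    using prod_one_plus_bounds(1)[OF assms, of k] assms(1)[of k] by simp
qed

lemma robbins_siegmund_path:
  fixes v c P T :: "nat \<Rightarrow> real"
  assumes convergent: "convergent (\<lambda>k. v k / P k + (\<Sum>j<k. c j / P (Suc j)) + T k)"
    and v_nonneg: "\<And>k. 0 \<le> v k" and c_nonneg: "\<And>k. 0 \<le> c k" and T_nonneg: "\<And>k. 0 \<le> T k"
    and P_ge_1: "\<And>k. 1 \<le> P k" and P_le: "\<And>k. P k \<le> K" and "convergent P" and "T \<longlonglongrightarrow> 0"
  shows "convergent v \<and> summable c"
proof -
  define A where "A k = (\<Sum>j<k. c j / P (Suc j))" for k
  have P_pos: "0 < P k" for k
    using P_ge_1[of k] by simp
  obtain B where B: "\<And>k. \<bar>v k / P k + A k + T k\<bar> \<le> B"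
    using convergent_imp_Bseq[OF convergent] by (auto simp: Bseq_def A_def)
  have "summable (\<lambda>j. c j / P (Suc j))"
  proof (rule summableI_nonneg_bounded)
    show "0 \<le> c j / P (Suc j)" for j
      using c_nonneg P_pos by (simp add: less_imp_le)
    show "(\<Sum>j<k. c j / P (Suc j)) \<le> B" for k
      using B[of k] divide_nonneg_pos[OF v_nonneg P_pos, of k k] T_nonneg[of k] by (simp add: A_def)
  qed
  then have "summable (\<lambda>j. K * (c j / P (Suc j)))"
    by (rule summable_mult)
  then have "summable c"
  proof (rule summable_comparison_test')
    fix j
    have "c j = P (Suc j) * (c j / P (Suc j))"
      using P_pos[of "Suc j"] by simp
    also have "\<dots> \<le> K * (c j / P (Suc j))"
      using P_le[of "Suc j"] c_nonneg[of j] P_pos[of "Suc j"] by (intro mult_right_mono) auto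
    finally show "norm (c j) \<le> K * (c j / P (Suc j))"
      using c_nonneg[of j] by simp
  qed
  moreover have "convergent (\<lambda>k. P k * ((v k / P k + A k + T k) - A k - T k))"
    using convergent \<open>convergent P\<close> \<open>summable (\<lambda>j. c j / P (Suc j))\<close> \<open>T \<longlonglongrightarrow> 0\<close>
    by (intro convergent_mult convergent_diff)
       (auto simp: A_def summable_iff_convergent convergent_def)
  then have "convergent v"
    using P_pos by (simp add: less_imp_neq[symmetric])
  ultimately show ?thesis
    by blast
qed

lemma tendsto_of_summable_drift:
  fixes x :: "nat \<Rightarrow> 'v::euclidean_space" and h :: "'v \<Rightarrow> 'v"
  assumes h: "continuous_on UNIV h" and drift_pos: "\<And>y. y \<noteq> x\<^sub>0 \<Longrightarrow> 0 < (y - x\<^sub>0) \<bullet> h y"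
    and dist_lim: "(\<lambda>m. (norm (x m - x\<^sub>0))\<^sup>2) \<longlonglongrightarrow> l"
    and summable: "summable (\<lambda>m. \<gamma> m * ((x m - x\<^sub>0) \<bullet> h (x m)))"
    and \<gamma>_pos: "\<And>m. 0 < \<gamma> m" and not_summable: "\<not> summable \<gamma>"
  shows "x \<longlonglongrightarrow> x\<^sub>0"
proof -
  have "0 \<le> l"
    by (rule LIMSEQ_le_const[OF dist_lim]) auto
  have "l = 0"
  proof (rule ccontr)
    assume "l \<noteq> 0"
    with \<open>0 \<le> l\<close> have "0 < l"
      by simp
    define K where "K = {y. l / 2 \<le> (norm (y - x\<^sub>0))\<^sup>2 \<and> (norm (y - x\<^sub>0))\<^sup>2 \<le> 2 * l}"
    have "eventually (\<lambda>m. l / 2 < (norm (x m - x\<^sub>0))\<^sup>2) sequentially"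
      using order_tendstoD(1)[OF dist_lim, of "l / 2"] \<open>0 < l\<close> by simp
    moreover have "eventually (\<lambda>m. (norm (x m - x\<^sub>0))\<^sup>2 < 2 * l) sequentially"
      using order_tendstoD(2)[OF dist_lim, of "2 * l"] \<open>0 < l\<close> by simp
    ultimately have eventually_K: "eventually (\<lambda>m. x m \<in> K) sequentially"
      unfolding K_def by eventually_elim auto
    then have "K \<noteq> {}"
      by (metis eventually_sequentially empty_iff order_refl)
    have "K \<subseteq> cball x\<^sub>0 (sqrt (2 * l))"
      by (auto simp: K_def dist_norm norm_minus_commute intro: real_le_rsqrt)
    moreover have "closed K"
      unfolding K_def by (intro closed_Collect_conj closed_Collect_le continuous_intros)
    ultimately have "compact K"
      by (metis compact_cball compact_Int_closed inf.absorb_iff2)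
    moreover have "continuous_on K (\<lambda>y. (y - x\<^sub>0) \<bullet> h y)"
      using h by (intro continuous_intros) (auto intro: continuous_on_subset)
    ultimately obtain y\<^sub>0 where "y\<^sub>0 \<in> K" and y\<^sub>0_min: "\<And>y. y \<in> K \<Longrightarrow> (y\<^sub>0 - x\<^sub>0) \<bullet> h y\<^sub>0 \<le> (y - x\<^sub>0) \<bullet> h y"
      using continuous_attains_inf[OF _ \<open>K \<noteq> {}\<close>] by blast
    define \<delta> where "\<delta> = (y\<^sub>0 - x\<^sub>0) \<bullet> h y\<^sub>0"
    have "y\<^sub>0 \<noteq> x\<^sub>0"
      using \<open>y\<^sub>0 \<in> K\<close> \<open>0 < l\<close> by (auto simp: K_def)
    then have "0 < \<delta>"
      unfolding \<delta>_def by (rule drift_pos)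
    have "eventually (\<lambda>m. norm (\<gamma> m) \<le> \<gamma> m * ((x m - x\<^sub>0) \<bullet> h (x m)) / \<delta>) sequentially"
      using eventually_K
    proof eventually_elim
      case (elim m)
      then have "\<gamma> m * \<delta> \<le> \<gamma> m * ((x m - x\<^sub>0) \<bullet> h (x m))"
        using \<gamma>_pos[of m] y\<^sub>0_min by (simp add: \<delta>_def)
      then show ?case
        using \<gamma>_pos[of m] \<open>0 < \<delta>\<close> by (simp add: field_simps)
    qed
    then have "summable \<gamma>"
      by (rule summable_comparison_test_ev) (intro summable_divide summable)
    then show False
      using not_summable by contradiction
  qed
  then have "(\<lambda>m. norm (x m - x\<^sub>0)) \<longlonglongrightarrow> 0"
    using tendsto_real_sqrt[OF dist_lim] by simp
  then show ?thesis
    by (simp add: LIM_zero_iff tendsto_norm_zero_iff)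
qed

section \<open>Processes driven by uniform random indices\<close>

locale random_index_history = prob_space M for M :: "'a measure" +
  fixes N :: nat and Z :: "'a \<Rightarrow> 'z::topological_space" and U :: "nat \<Rightarrow> 'a \<Rightarrow> nat"
  assumes N_ge_1: "N \<ge> 1"
  and Z_measurable: "Z \<in> borel_measurable M"
  and U_measurable: "\<And>n. n \<ge> 2 \<Longrightarrow> U n \<in> measurable M (count_space UNIV)"
  and U_uniform: "\<And>n. n \<ge> 2 \<Longrightarrow> distr M (count_space UNIV) (U n) = measure_pmf (pmf_of_set {1..N})"
  and U_indep: "indep_vars (\<lambda>_. count_space UNIV) U {2..}"
  and Z_U_indep: "indep_set (sets (vimage_algebra (space M) Z borel))
        (sets (vimage_algebra (space M) (\<lambda>\<omega>. restrict (\<lambda>n. U n \<omega>) {2::nat..})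
          (PiM {2..} (\<lambda>_. count_space UNIV))))"
begin

abbreviation U_sets :: "'a set set" where
  "U_sets \<equiv> sets (vimage_algebra (space M) (\<lambda>\<omega>. restrict (\<lambda>n. U n \<omega>) {2::nat..})
     (PiM {2..} (\<lambda>_. count_space UNIV)))"

declare Z_measurable[measurable]

definition index_list :: "nat \<Rightarrow> 'a \<Rightarrow> nat list" where
  "index_list m \<omega> = map (\<lambda>i. U (i + 2) \<omega>) [0..<m]"

definition history :: "nat \<Rightarrow> 'a \<Rightarrow> 'z \<times> nat list" where
  "history m \<omega> = (Z \<omega>, index_list m \<omega>)"

definition history_space :: "('z \<times> nat list) measure" where
  "history_space = borel \<Otimes>\<^sub>M count_space UNIV"

definition index_lists :: "nat \<Rightarrow> nat list set" where
  "index_lists m = {l. set l \<subseteq> {1..N} \<and> length l = m}"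

text \<open>\<open>history m\<close> is the information available after \<open>m\<close> steps, and \<open>next_mean \<phi> h\<close> is the
  conditional expectation of \<open>\<phi>\<close> one step later given the history \<open>h\<close>.\<close>

definition next_mean :: "('z \<times> nat list \<Rightarrow> real) \<Rightarrow> 'z \<times> nat list \<Rightarrow> real" where
  "next_mean \<phi> h = (\<Sum>k\<in>{1..N}. \<phi> (fst h, snd h @ [k])) / real N"

lemma N_pos: "0 < real N"
  using N_ge_1 by simp

lemma prob_U_eq:
  assumes "n \<ge> 2" "k \<in> {1..N}"
  shows "prob {\<omega>\<in>space M. U n \<omega> = k} = 1 / real N"
proof -
  have "prob {\<omega>\<in>space M. U n \<omega> = k} = measure (distr M (count_space UNIV) (U n)) {k}"
    using U_measurable[OF assms(1)] by (subst measure_distr) (auto intro!: arg_cong[where f=prob])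
  also have "\<dots> = 1 / real N"
    using assms N_ge_1 by (simp add: U_uniform measure_pmf_of_set)
  finally show ?thesis .
qed

lemma AE_U_in_range: "AE \<omega> in M. \<forall>n\<ge>2. U n \<omega> \<in> {1..N}"
proof -
  have "AE \<omega> in M. \<omega> \<in> {\<omega>\<in>space M. U n \<omega> \<in> {1..N}}" if n: "n \<ge> 2" for n
  proof (rule AE_prob_1)
    have "prob {\<omega>\<in>space M. U n \<omega> \<in> {1..N}} = measure (distr M (count_space UNIV) (U n)) {1..N}"
      using U_measurable[OF n] by (subst measure_distr) (auto intro!: arg_cong[where f=prob])
    then show "prob {\<omega>\<in>space M. U n \<omega> \<in> {1..N}} = 1"
      using N_ge_1 by (simp add: U_uniform[OF n] measure_pmf_of_set)
  qed
  then have "\<forall>n. AE \<omega> in M. n \<ge> 2 \<longrightarrow> U n \<omega> \<in> {1..N}"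
    by (auto elim!: AE_mp)
  then show ?thesis
    by (subst AE_all_countable) auto
qed

lemma AE_index_list_in_index_lists: "AE \<omega> in M. index_list m \<omega> \<in> index_lists m"
  using AE_U_in_range by eventually_elim (auto simp: index_list_def index_lists_def)

lemma index_list_eq_iff:
  assumes "length l = m"
  shows "index_list m \<omega> = l \<longleftrightarrow> (\<forall>i\<in>{2..<m+2}. U i \<omega> = l ! (i - 2))"
proof
  assume "index_list m \<omega> = l"
  then show "\<forall>i\<in>{2..<m+2}. U i \<omega> = l ! (i - 2)"
    by (auto simp: index_list_def le_iff_add)
next
  assume "\<forall>i\<in>{2..<m+2}. U i \<omega> = l ! (i - 2)"
  then have "U (j + 2) \<omega> = l ! j" if "j < m" for j
    using that by (metis add_diff_cancel_right' atLeastLessThan_iff le_add2 add_less_cancel_right)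
  then show "index_list m \<omega> = l"
    using assms by (auto simp: index_list_def list_eq_iff_nth_eq)
qed

lemma U_event_in_U_sets:
  assumes "J \<subseteq> {2..}"
  shows "{\<omega>\<in>space M. \<forall>i\<in>J. U i \<omega> = a i} \<in> U_sets"
proof -
  let ?P = "PiM {2::nat..} (\<lambda>_. count_space (UNIV::nat set))"
  have S: "{f\<in>space ?P. \<forall>i\<in>J. f i = a i} \<in> sets ?P"
  proof (rule predE, rule pred_intros_countable_bounded(3))
    fix i assume "i \<in> J"
    then show "Measurable.pred ?P (\<lambda>f. f i = a i)"
      using assms by auto
  qed
  have "{\<omega>\<in>space M. \<forall>i\<in>J. U i \<omega> = a i}
      = (\<lambda>\<omega>. restrict (\<lambda>n. U n \<omega>) {2..}) -` {f\<in>space ?P. \<forall>i\<in>J. f i = a i} \<inter> space M"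
    using assms by (auto simp: space_PiM)
  also have "\<dots> \<in> U_sets"
    unfolding sets_vimage_algebra using S by (intro sigma_sets.Basic) blast
  finally show ?thesis .
qed

lemma U_sets_subset_events: "U_sets \<subseteq> events"
  using Z_U_indep by (rule indep_setD_ev2)

lemma index_list_event_in_U_sets: "{\<omega>\<in>space M. index_list m \<omega> = l} \<in> U_sets"
proof (cases "length l = m")
  case True
  have "{2..<m+2} \<subseteq> {2::nat..}"
    by auto
  from U_event_in_U_sets[OF this, of "\<lambda>i. l ! (i - 2)"] show ?thesis
    using True by (simp add: index_list_eq_iff)
next
  case False
  then have "{\<omega>\<in>space M. index_list m \<omega> = l} = {}"
    by (auto simp: index_list_def)
  then show ?thesis
    by (simp only: sets.empty_sets)
qed

lemma index_list_measurable[measurable]: "index_list m \<in> measurable M (count_space UNIV)"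
proof (subst measurable_count_space_eq2_countable, safe)
  fix l
  have "index_list m -` {l} \<inter> space M = {\<omega>\<in>space M. index_list m \<omega> = l}"
    by auto
  then show "index_list m -` {l} \<inter> space M \<in> events"
    using index_list_event_in_U_sets U_sets_subset_events by auto
qed simp

lemma history_measurable[measurable]: "history m \<in> measurable M history_space"
  unfolding history_def[abs_def] history_space_def using Z_measurable by measurable

lemma prob_index_list_eq:
  assumes "l \<in> index_lists m"
  shows "prob {\<omega>\<in>space M. index_list m \<omega> = l} = 1 / real N ^ m"
proof (cases "m = 0")
  case True
  then show ?thesis
    using assms by (simp add: index_list_def index_lists_def prob_space)
next
  case False
  have len: "length l = m" and l: "set l \<subseteq> {1..N}"
    using assms by (auto simp: index_lists_def)
  have "prob {\<omega>\<in>space M. index_list m \<omega> = l}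
      = prob (\<Inter>i\<in>{2..<m+2}. U i -` {l ! (i - 2)} \<inter> space M)"
    using False by (intro arg_cong[where f=prob]) (auto simp: index_list_eq_iff[OF len])
  also have "\<dots> = (\<Prod>i\<in>{2..<m+2}. prob (U i -` {l ! (i - 2)} \<inter> space M))"
    using False by (intro indep_varsD[OF U_indep]) auto
  also have "\<dots> = (\<Prod>i\<in>{2..<m+2}. 1 / real N)"
  proof (intro prod.cong refl)
    fix i assume i: "i \<in> {2..<m+2}"
    then have "i - 2 < length l"
      using len by auto
    then have "l ! (i - 2) \<in> {1..N}"
      using l nth_mem by blast
    then show "prob (U i -` {l ! (i - 2)} \<inter> space M) = 1 / real N"
      using prob_U_eq[of i "l ! (i - 2)"] i by (simp add: vimage_def Int_def conj_commute)
  qed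
  finally show ?thesis
    by (simp add: power_one_over)
qed

lemma sum_index_lists_Suc:
  "(\<Sum>l\<in>index_lists (Suc m). f l) = (\<Sum>l\<in>index_lists m. \<Sum>k\<in>{1..N}. f (l @ [k]))"
proof -
  have "(\<Sum>l\<in>index_lists m. \<Sum>k\<in>{1..N}. f (l @ [k])) = (\<Sum>(l, k)\<in>index_lists m \<times> {1..N}. f (l @ [k]))"
    by (rule sum.cartesian_product)
  also have "\<dots> = (\<Sum>l\<in>index_lists (Suc m). f l)"
  proof (rule sum.reindex_bij_witness[of _ "\<lambda>l. (butlast l, last l)" "\<lambda>(l, k). l @ [k]"])
    fix l assume "l \<in> index_lists (Suc m)"
    then have "l \<noteq> []" "set l \<subseteq> {1..N}" "length l = Suc m"
      by (auto simp: index_lists_def)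
    then show "(\<lambda>(l, k). l @ [k]) (butlast l, last l) = l"
      and "(butlast l, last l) \<in> index_lists m \<times> {1..N}"
      by (auto simp: index_lists_def in_set_butlastD dest!: last_in_set)
  qed (auto simp: index_lists_def)
  finally show ?thesis ..
qed

lemma indep_var_Z_indicator:
  fixes g :: "'z \<Rightarrow> real"
  assumes g: "g \<in> borel_measurable borel" and C: "C \<in> U_sets"
  shows "indep_var borel (\<lambda>\<omega>. g (Z \<omega>)) borel (indicator C :: 'a \<Rightarrow> real)"
proof -
  have C_event: "C \<in> events"
    using C U_sets_subset_events by auto
  then have [measurable]: "(indicator C :: 'a \<Rightarrow> real) \<in> borel_measurable M"
    by simp
  have [measurable]: "(\<lambda>\<omega>. g (Z \<omega>)) \<in> borel_measurable M"
    using g Z_measurable by measurable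
  have Z_sets: "sigma_sets (space M) {(\<lambda>\<omega>. g (Z \<omega>)) -` A \<inter> space M | A. A \<in> sets borel}
      \<subseteq> sets (vimage_algebra (space M) Z borel)"
  proof (rule sets.sigma_sets_subset')
    show "{(\<lambda>\<omega>. g (Z \<omega>)) -` A \<inter> space M | A. A \<in> sets borel} \<subseteq> sets (vimage_algebra (space M) Z borel)"
    proof safe
      fix A :: "real set" assume "A \<in> sets borel"
      then have "g -` A \<in> sets borel"
        using measurable_sets[OF g] by simp
      moreover have "(\<lambda>\<omega>. g (Z \<omega>)) -` A \<inter> space M = Z -` (g -` A) \<inter> space M"
        by auto
      ultimately show "(\<lambda>\<omega>. g (Z \<omega>)) -` A \<inter> space M \<in> sets (vimage_algebra (space M) Z borel)"
        unfolding sets_vimage_algebra by (auto intro!: sigma_sets.Basic)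
    qed
  qed (rule sets_vimage_algebra_space)
  have C_sets: "sigma_sets (space M) {indicator C -` A \<inter> space M | A. A \<in> sets (borel :: real measure)}
      \<subseteq> U_sets"
  proof (rule sets.sigma_sets_subset')
    show "{indicator C -` A \<inter> space M | A. A \<in> sets (borel :: real measure)} \<subseteq> U_sets"
    proof safe
      fix A :: "real set"
      have "indicator C -` A \<inter> space M
          = (if (1::real) \<in> A then C else {}) \<union> (if (0::real) \<in> A then space M - C else {})"
        using sets.sets_into_space[OF C_event] by (auto simp: indicator_def of_bool_def split: if_split_asm)
      moreover have "space M - C \<in> U_sets"
        by (rule sets.Diff[OF sets_vimage_algebra_space C])
      ultimately show "indicator C -` A \<inter> space M \<in> U_sets"
        using C by (auto intro!: sets.Un sets_vimage_algebra_space)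
    qed
  qed (rule sets_vimage_algebra_space)
  have "indep_set (sigma_sets (space M) {(\<lambda>\<omega>. g (Z \<omega>)) -` A \<inter> space M | A. A \<in> sets borel})
      (sigma_sets (space M) {indicator C -` A \<inter> space M | A. A \<in> sets (borel :: real measure)})"
    unfolding indep_set_def
    by (rule indep_sets_mono_sets[OF Z_U_indep[unfolded indep_set_def]])
       (use Z_sets C_sets in \<open>auto split: bool.split\<close>)
  then show ?thesis
    by (subst indep_var_eq) simp
qed

lemma integral_Z_indicator_U_set:
  fixes g :: "'z \<Rightarrow> real"
  assumes g: "g \<in> borel_measurable borel" and g_bounded: "\<And>z. \<bar>g z\<bar> \<le> B" and C: "C \<in> U_sets"
  shows "(\<integral>\<omega>. g (Z \<omega>) * indicator C \<omega> \<partial>M) = (\<integral>\<omega>. g (Z \<omega>) \<partial>M) * prob C"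
proof -
  have C_event: "C \<in> events"
    using C U_sets_subset_events by auto
  have "integrable M (\<lambda>\<omega>. g (Z \<omega>))"
    using g Z_measurable by (intro integrable_const_bound[where B=B]) (auto simp: g_bounded)
  moreover have "integrable M (indicator C :: 'a \<Rightarrow> real)"
    using C_event by (intro integrable_const_bound[where B=1]) (auto simp: indicator_def)
  ultimately show ?thesis
    using indep_var_Z_indicator[OF g C] C_event
    by (simp add: indep_var_lebesgue_integral emeasure_eq_measure)
qed

lemma next_mean_measurable[measurable]:
  assumes [measurable]: "\<phi> \<in> borel_measurable history_space"
  shows "next_mean \<phi> \<in> borel_measurable history_space"
proof -
  have [measurable]: "(\<lambda>h. (fst h, snd h @ [k])) \<in> measurable history_space history_space" for k
    unfolding history_space_def by measurable
  show ?thesis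
    unfolding next_mean_def[abs_def] by measurable
qed

lemma abs_next_mean_le:
  assumes "\<And>h. \<bar>\<phi> h\<bar> \<le> B"
  shows "\<bar>next_mean \<phi> h\<bar> \<le> B"
proof -
  have "\<bar>\<Sum>k\<in>{1..N}. \<phi> (fst h, snd h @ [k])\<bar> \<le> (\<Sum>k\<in>{1..N}. B)"
    by (rule order.trans[OF sum_abs sum_mono]) (rule assms)
  then show ?thesis
    using N_pos by (simp add: next_mean_def divide_le_eq mult.commute)
qed

lemma next_mean_mono:
  "(\<And>h. \<phi> h \<le> \<psi> h) \<Longrightarrow> next_mean \<phi> h \<le> next_mean \<psi> h"
  unfolding next_mean_def using N_pos by (intro divide_right_mono sum_mono) auto

definition truncate :: "nat \<Rightarrow> 'z \<times> nat list \<Rightarrow> 'z \<times> nat list" where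
  "truncate j h = (fst h, take j (snd h))"

lemma truncate_measurable[measurable]: "truncate j \<in> measurable history_space history_space"
  unfolding history_space_def truncate_def[abs_def] by measurable

lemma truncate_history: "j \<le> n \<Longrightarrow> truncate j (history n \<omega>) = history j \<omega>"
  by (simp add: truncate_def history_def index_list_def take_map)

lemma truncate_full: "length (snd h) = j \<Longrightarrow> truncate j h = h"
  by (simp add: truncate_def)

lemma truncate_snoc: "j \<le> length (snd h) \<Longrightarrow> truncate j (fst h, snd h @ [i]) = truncate j h"
  by (simp add: truncate_def)

lemma length_history[simp]: "length (snd (history m \<omega>)) = m"
  by (simp add: history_def index_list_def)

lemma next_mean_mult_truncate:
  assumes "j \<le> length (snd h)"
  shows "next_mean (\<lambda>h'. c (truncate j h') * \<phi> h') h = c (truncate j h) * next_mean \<phi> h"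
  using assms by (simp add: next_mean_def truncate_def sum_distrib_left)

lemma next_mean_const: "next_mean (\<lambda>_. c) h = c"
  using N_pos by (simp add: next_mean_def)

lemma next_mean_diff: "next_mean (\<lambda>h. \<phi> h - \<psi> h) h = next_mean \<phi> h - next_mean \<psi> h"
  by (simp add: next_mean_def sum_subtractf diff_divide_distrib)

lemma next_mean_truncate:
  "length (snd h) = k \<Longrightarrow> next_mean (\<lambda>h'. c (truncate k h')) h = c h"
  using next_mean_mult_truncate[of k h c "\<lambda>_. 1"] by (simp add: next_mean_const truncate_full)

lemma integral_history_eq_sum:
  assumes phi[measurable]: "\<phi> \<in> borel_measurable history_space" and bounded: "\<And>h. \<bar>\<phi> h\<bar> \<le> B"
  shows "(\<integral>\<omega>. \<phi> (history m \<omega>) \<partial>M) = (\<Sum>l\<in>index_lists m. \<integral>\<omega>. \<phi> (Z \<omega>, l) \<partial>M) / real N ^ m"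
proof -
  define E where "E l = {\<omega>\<in>space M. index_list m \<omega> = l}" for l
  have finite: "finite (index_lists m)"
    unfolding index_lists_def by (rule finite_lists_length_eq) simp
  have phi_l[measurable]: "(\<lambda>z. \<phi> (z, l)) \<in> borel_measurable borel" for l
    using phi unfolding history_space_def by measurable
  have E_U: "E l \<in> U_sets" for l
    unfolding E_def by (rule index_list_event_in_U_sets)
  have [measurable]: "E l \<in> events" for l
    using E_U U_sets_subset_events by auto
  have prob_E: "prob (E l) = 1 / real N ^ m" if "l \<in> index_lists m" for l
    unfolding E_def using that by (rule prob_index_list_eq)
  have "0 \<le> B"
    using bounded by (rule order.trans[OF abs_ge_zero])
  then have integrable: "integrable M (\<lambda>\<omega>. \<phi> (Z \<omega>, l) * indicator (E l) \<omega>)" for l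
    by (intro integrable_const_bound[where B=B]) (auto simp: indicator_def bounded)
  have "AE \<omega> in M. \<phi> (history m \<omega>) = (\<Sum>l\<in>index_lists m. \<phi> (Z \<omega>, l) * indicator (E l) \<omega>)"
    using AE_index_list_in_index_lists[of m] AE_space
  proof eventually_elim
    case (elim \<omega>)
    then have "(\<Sum>l\<in>index_lists m. \<phi> (Z \<omega>, l) * indicator (E l) \<omega>)
        = (\<Sum>l\<in>index_lists m. if index_list m \<omega> = l then \<phi> (Z \<omega>, l) else 0)"
      by (intro sum.cong) (auto simp: indicator_def E_def)
    then show ?case
      using elim finite by (simp add: history_def)
  qed
  then have "(\<integral>\<omega>. \<phi> (history m \<omega>) \<partial>M)
      = (\<integral>\<omega>. (\<Sum>l\<in>index_lists m. \<phi> (Z \<omega>, l) * indicator (E l) \<omega>) \<partial>M)"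
    by (intro integral_cong_AE) auto
  also have "\<dots> = (\<Sum>l\<in>index_lists m. \<integral>\<omega>. \<phi> (Z \<omega>, l) * indicator (E l) \<omega> \<partial>M)"
    using integrable by (rule Bochner_Integration.integral_sum)
  also have "\<dots> = (\<Sum>l\<in>index_lists m. (\<integral>\<omega>. \<phi> (Z \<omega>, l) \<partial>M) / real N ^ m)"
    by (intro sum.cong refl)
       (simp add: integral_Z_indicator_U_set[OF phi_l bounded E_U] prob_E)
  finally show ?thesis
    by (simp add: sum_divide_distrib)
qed

text \<open>The tower property: the next index is uniform and independent of the history so far.\<close>

lemma integral_history_Suc:
  assumes phi[measurable]: "\<phi> \<in> borel_measurable history_space" and bounded: "\<And>h. \<bar>\<phi> h\<bar> \<le> B"
  shows "(\<integral>\<omega>. \<phi> (history (Suc m) \<omega>) \<partial>M) = (\<integral>\<omega>. next_mean \<phi> (history m \<omega>) \<partial>M)"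
proof -
  have [measurable]: "(\<lambda>z. \<phi> (z, l)) \<in> borel_measurable borel" for l
    using phi unfolding history_space_def by measurable
  have integrable: "integrable M (\<lambda>\<omega>. \<phi> (Z \<omega>, l))" for l
    by (rule integrable_const_bound[where B=B]) (auto simp: bounded)
  have "(\<integral>\<omega>. next_mean \<phi> (history m \<omega>) \<partial>M)
      = (\<Sum>l\<in>index_lists m. \<integral>\<omega>. next_mean \<phi> (Z \<omega>, l) \<partial>M) / real N ^ m"
    by (rule integral_history_eq_sum) (auto intro: abs_next_mean_le bounded)
  also have "\<dots> = (\<Sum>l\<in>index_lists m. (\<Sum>k\<in>{1..N}. \<integral>\<omega>. \<phi> (Z \<omega>, l @ [k]) \<partial>M) / real N) / real N ^ m"
    using integrable by (simp add: next_mean_def Bochner_Integration.integral_sum)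
  also have "\<dots> = (\<Sum>l\<in>index_lists (Suc m). \<integral>\<omega>. \<phi> (Z \<omega>, l) \<partial>M) / real N ^ Suc m"
    by (simp add: sum_index_lists_Suc sum_divide_distrib)
  also have "\<dots> = (\<integral>\<omega>. \<phi> (history (Suc m) \<omega>) \<partial>M)"
    by (rule integral_history_eq_sum[symmetric]) (use bounded in auto)
  finally show ?thesis ..
qed

lemma integrable_bounded:
  fixes f :: "'a \<Rightarrow> real"
  assumes "f \<in> borel_measurable M" "\<And>\<omega>. \<bar>f \<omega>\<bar> \<le> C"
  shows "integrable M f"
  using assms by (intro integrable_const_bound[where B=C]) auto

lemma integral_mult_martingale_difference:
  assumes [measurable]: "\<psi> \<in> borel_measurable history_space" "\<delta> \<in> borel_measurable history_space"
    and psi_bounded: "\<And>h. \<bar>\<psi> h\<bar> \<le> B1" and delta_bounded: "\<And>h. \<bar>\<delta> h\<bar> \<le> B2"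
    and centered: "\<And>h. length (snd h) = k \<Longrightarrow> next_mean \<delta> h = 0"
    and "j \<le> k"
  shows "(\<integral>\<omega>. \<psi> (history j \<omega>) * \<delta> (history (Suc k) \<omega>) \<partial>M) = 0"
proof -
  have "\<bar>\<psi> (truncate j h) * \<delta> h\<bar> \<le> B1 * B2" for h
    unfolding abs_mult using psi_bounded delta_bounded
    by (intro mult_mono) (auto intro: order.trans[OF abs_ge_zero])
  then have "(\<integral>\<omega>. \<psi> (truncate j (history (Suc k) \<omega>)) * \<delta> (history (Suc k) \<omega>) \<partial>M)
      = (\<integral>\<omega>. next_mean (\<lambda>h. \<psi> (truncate j h) * \<delta> h) (history k \<omega>) \<partial>M)"
    by (intro integral_history_Suc) auto
  also have "\<dots> = 0"
    using \<open>j \<le> k\<close> by (simp add: next_mean_mult_truncate centered)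
  finally show ?thesis
    using \<open>j \<le> k\<close> by (simp add: truncate_history)
qed

end

section \<open>Martingale convergence and the Robbins--Siegmund theorem\<close>

locale bounded_martingale_differences = random_index_history M N Z U
  for M :: "'a measure" and N and Z :: "'a \<Rightarrow> 'z::topological_space" and U +
  fixes \<delta> :: "nat \<Rightarrow> 'z \<times> nat list \<Rightarrow> real" and B :: real
  assumes \<delta>_measurable[measurable]: "\<And>k. \<delta> k \<in> borel_measurable history_space"
    and \<delta>_bounded: "\<And>k h. \<bar>\<delta> k h\<bar> \<le> B"
    and \<delta>_centered: "\<And>k h. length (snd h) = k \<Longrightarrow> next_mean (\<delta> k) h = 0"
begin

definition increment :: "nat \<Rightarrow> 'a \<Rightarrow> real" where
  "increment k \<omega> = \<delta> k (history (Suc k) \<omega>)"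

definition increment_sum :: "nat \<Rightarrow> nat \<Rightarrow> 'a \<Rightarrow> real" where
  "increment_sum m j \<omega> = (\<Sum>k\<in>{m..<j}. increment k \<omega>)"

text \<open>The same partial sum, read off a history long enough to contain it.\<close>

definition increment_sum_of :: "nat \<Rightarrow> nat \<Rightarrow> 'z \<times> nat list \<Rightarrow> real" where
  "increment_sum_of m j h = (\<Sum>k\<in>{m..<j}. \<delta> k (truncate (Suc k) h))"

lemma B_nonneg: "0 \<le> B"
  using \<delta>_bounded[of 0] by (rule order.trans[OF abs_ge_zero])

lemma increment_measurable[measurable]: "increment k \<in> borel_measurable M"
  unfolding increment_def by measurable

lemma increment_sum_measurable[measurable]: "increment_sum m j \<in> borel_measurable M"
  unfolding increment_sum_def by measurable

lemma increment_sum_of_measurable[measurable]: "increment_sum_of m j \<in> borel_measurable history_space"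
  unfolding increment_sum_of_def by measurable

lemma increment_sum_of_history:
  "j \<le> n \<Longrightarrow> increment_sum_of m j (history n \<omega>) = increment_sum m j \<omega>"
  unfolding increment_sum_of_def increment_sum_def increment_def
  by (intro sum.cong refl) (simp add: truncate_history)

lemma abs_increment_le: "\<bar>increment k \<omega>\<bar> \<le> B"
  unfolding increment_def by (rule \<delta>_bounded)

lemma abs_sum_le_card_mult:
  fixes f :: "nat \<Rightarrow> real"
  assumes "\<And>k. \<bar>f k\<bar> \<le> C"
  shows "\<bar>\<Sum>k\<in>{m..<j}. f k\<bar> \<le> real j * C"
proof -
  have "\<bar>\<Sum>k\<in>{m..<j}. f k\<bar> \<le> real (j - m) * C"
    by (rule order.trans[OF sum_abs]) (use sum_mono[of "{m..<j}" "\<lambda>k. \<bar>f k\<bar>" "\<lambda>_. C"] assms in simp)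
  also have "\<dots> \<le> real j * C"
    using order.trans[OF abs_ge_zero assms] by (intro mult_right_mono) auto
  finally show ?thesis .
qed

lemma abs_increment_sum_le: "\<bar>increment_sum m j \<omega>\<bar> \<le> real j * B"
  unfolding increment_sum_def by (rule abs_sum_le_card_mult) (rule abs_increment_le)

lemma abs_increment_sum_of_le: "\<bar>increment_sum_of m j h\<bar> \<le> real j * B"
  unfolding increment_sum_of_def by (rule abs_sum_le_card_mult) (rule \<delta>_bounded)

lemma integral_mult_increment:
  assumes "\<psi> \<in> borel_measurable history_space" "\<And>h. \<bar>\<psi> h\<bar> \<le> C" "j \<le> k"
  shows "(\<integral>\<omega>. \<psi> (history j \<omega>) * increment k \<omega> \<partial>M) = 0"
  unfolding increment_def
  by (rule integral_mult_martingale_difference[OF assms(1) \<delta>_measurable assms(2) \<delta>_bounded \<delta>_centered assms(3)])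

lemma integrable_increment_sum_mult:
  "integrable M (\<lambda>\<omega>. c \<omega> * increment_sum m j \<omega> * increment k \<omega>)"
  if "c \<in> borel_measurable M" "\<And>\<omega>. \<bar>c \<omega>\<bar> \<le> 1"
proof (rule integrable_bounded)
  show "\<bar>c \<omega> * increment_sum m j \<omega> * increment k \<omega>\<bar> \<le> 1 * (real j * B) * B" for \<omega>
    unfolding abs_mult using that B_nonneg
    by (intro mult_mono abs_increment_sum_le abs_increment_le) auto
qed (use that in measurable)

lemma integrable_sq_increment: "integrable M (\<lambda>\<omega>. (increment k \<omega>)\<^sup>2)"
  by (rule integrable_bounded[where C="B\<^sup>2"]) (auto intro!: power2_le_if_abs_le abs_increment_le)

lemma integrable_of_bool_sq_increment_sum:
  "Measurable.pred M Q \<Longrightarrow> integrable M (\<lambda>\<omega>. of_bool (Q \<omega>) * (increment_sum m j \<omega>)\<^sup>2)"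
  by (rule integrable_bounded[where C="(real j * B)\<^sup>2"])
     (auto intro!: power2_le_if_abs_le abs_increment_sum_le)

lemma integral_increment_sum_sq:
  assumes "m \<le> n"
  shows "(\<integral>\<omega>. (increment_sum m n \<omega>)\<^sup>2 \<partial>M) = (\<Sum>k\<in>{m..<n}. \<integral>\<omega>. (increment k \<omega>)\<^sup>2 \<partial>M)"
  using assms
proof (induction n rule: dec_induct)
  case base
  then show ?case
    by (simp add: increment_sum_def)
next
  case (step n)
  have "increment_sum m (Suc n) \<omega> = increment_sum m n \<omega> + increment n \<omega>" for \<omega>
    using step(1) by (simp add: increment_sum_def)
  then have "(\<lambda>\<omega>. (increment_sum m (Suc n) \<omega>)\<^sup>2) = (\<lambda>\<omega>. (increment_sum m n \<omega>)\<^sup>2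
      + 2 * (increment_sum_of m n (history n \<omega>) * increment n \<omega>) + (increment n \<omega>)\<^sup>2)"
    by (simp add: increment_sum_of_history power2_eq_square algebra_simps)
  moreover have "(\<integral>\<omega>. increment_sum_of m n (history n \<omega>) * increment n \<omega> \<partial>M) = 0"
    by (rule integral_mult_increment[OF _ abs_increment_sum_of_le]) auto
  moreover have "integrable M (\<lambda>\<omega>. increment_sum_of m n (history n \<omega>) * increment n \<omega>)"
    using integrable_increment_sum_mult[of "\<lambda>_. 1" m n n] by (simp add: increment_sum_of_history)
  ultimately show ?case
    using step(1,3) integrable_sq_increment integrable_of_bool_sq_increment_sum[of "\<lambda>_. True" m n]
    by simp
qed

text \<open>Increments after time \<open>j\<close> are orthogonal to everything known at time \<open>j\<close>.\<close>

lemma integral_sq_increment_sum_mono: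
  assumes [measurable]: "Measurable.pred history_space P" and "m \<le> j" "j \<le> n"
  shows "(\<integral>\<omega>. of_bool (P (history j \<omega>)) * (increment_sum m j \<omega>)\<^sup>2 \<partial>M)
    \<le> (\<integral>\<omega>. of_bool (P (history j \<omega>)) * (increment_sum m n \<omega>)\<^sup>2 \<partial>M)"
proof -
  define \<psi> where "\<psi> h = of_bool (P h) * increment_sum_of m j h" for h
  have [measurable]: "\<psi> \<in> borel_measurable history_space"
    unfolding \<psi>_def by measurable
  have \<psi>_bounded: "\<bar>\<psi> h\<bar> \<le> real j * B" for h
    unfolding \<psi>_def using abs_increment_sum_of_le[of m j h] B_nonneg by auto
  have \<psi>_history: "\<psi> (history j \<omega>) = of_bool (P (history j \<omega>)) * increment_sum m j \<omega>" for \<omega>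
    by (simp add: \<psi>_def increment_sum_of_history)
  have integrable: "integrable M (\<lambda>\<omega>. \<psi> (history j \<omega>) * increment k \<omega>)" for k
    unfolding \<psi>_history mult.assoc[symmetric]
    by (rule integrable_increment_sum_mult) auto
  have "(\<integral>\<omega>. \<psi> (history j \<omega>) * increment_sum j n \<omega> \<partial>M)
      = (\<Sum>k\<in>{j..<n}. \<integral>\<omega>. \<psi> (history j \<omega>) * increment k \<omega> \<partial>M)"
    using integrable by (simp add: increment_sum_def sum_distrib_left)
  also have "\<dots> = 0"
    by (intro sum.neutral ballI integral_mult_increment[OF _ \<psi>_bounded]) auto
  finally have cross: "(\<integral>\<omega>. \<psi> (history j \<omega>) * increment_sum j n \<omega> \<partial>M) = 0" .
  have integrable_cross: "integrable M (\<lambda>\<omega>. \<psi> (history j \<omega>) * increment_sum j n \<omega>)"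
    unfolding increment_sum_def sum_distrib_left by (intro Bochner_Integration.integrable_sum integrable)
  have split: "increment_sum m n \<omega> = increment_sum m j \<omega> + increment_sum j n \<omega>" for \<omega>
    unfolding increment_sum_def using assms(2,3) by (simp add: sum.atLeastLessThan_concat)
  have "of_bool (P (history j \<omega>)) * (increment_sum m j \<omega>)\<^sup>2
      + 2 * (\<psi> (history j \<omega>) * increment_sum j n \<omega>)
      \<le> of_bool (P (history j \<omega>)) * (increment_sum m n \<omega>)\<^sup>2" for \<omega>
    unfolding split \<psi>_history by (cases "P (history j \<omega>)") (simp_all add: power2_eq_square algebra_simps)
  then have "(\<integral>\<omega>. of_bool (P (history j \<omega>)) * (increment_sum m j \<omega>)\<^sup>2
      + 2 * (\<psi> (history j \<omega>) * increment_sum j n \<omega>) \<partial>M)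
      \<le> (\<integral>\<omega>. of_bool (P (history j \<omega>)) * (increment_sum m n \<omega>)\<^sup>2 \<partial>M)"
    by (intro integral_mono) (use integrable_cross integrable_of_bool_sq_increment_sum in auto)
  then show ?thesis
    using cross integrable_cross by (simp add: integrable_of_bool_sq_increment_sum)
qed

theorem kolmogorov_maximal_inequality:
  assumes "m \<le> n" "0 < \<epsilon>"
  shows "\<epsilon>\<^sup>2 * prob {\<omega>\<in>space M. \<exists>j\<in>{m<..n}. \<epsilon> \<le> \<bar>increment_sum m j \<omega>\<bar>}
    \<le> (\<Sum>k\<in>{m..<n}. \<integral>\<omega>. (increment k \<omega>)\<^sup>2 \<partial>M)"
proof -
  define first_exit where
    "first_exit j h \<longleftrightarrow> \<epsilon> \<le> \<bar>increment_sum_of m j h\<bar> \<and> (\<forall>i\<in>{m<..<j}. \<not> \<epsilon> \<le> \<bar>increment_sum_of m i h\<bar>)"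
    for j h
  have [measurable]: "Measurable.pred history_space (first_exit j)" for j
    unfolding first_exit_def by measurable
  define X :: "nat \<Rightarrow> 'a \<Rightarrow> real" where "X j \<omega> = of_bool (first_exit j (history j \<omega>))" for j \<omega>
  have [measurable]: "X j \<in> borel_measurable M" for j
    unfolding X_def by measurable
  define E where "E = {\<omega>\<in>space M. \<exists>j\<in>{m<..n}. \<epsilon> \<le> \<bar>increment_sum m j \<omega>\<bar>}"
  have [measurable]: "E \<in> events"
    unfolding E_def by measurable
  have sum_X: "(\<Sum>j\<in>{m<..n}. X j \<omega>) = indicator E \<omega>" if "\<omega> \<in> space M" for \<omega>
    using that sum_first_hit[where P="\<lambda>j. \<epsilon> \<le> \<bar>increment_sum m j \<omega>\<bar>" and m=m and n=n]
    by (simp add: X_def first_exit_def increment_sum_of_history E_def indicator_def)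
  have integrable_X: "integrable M (\<lambda>\<omega>. X j \<omega> * c)" for j c
    by (rule integrable_bounded[where C="\<bar>c\<bar>"]) (auto simp: X_def)
  have integrable_X_sq: "integrable M (\<lambda>\<omega>. X j \<omega> * (increment_sum m i \<omega>)\<^sup>2)" for i j
    unfolding X_def by (rule integrable_of_bool_sq_increment_sum) measurable
  have "\<epsilon>\<^sup>2 * prob E = (\<integral>\<omega>. indicator E \<omega> * \<epsilon>\<^sup>2 \<partial>M)"
    by simp
  also have "\<dots> = (\<integral>\<omega>. (\<Sum>j\<in>{m<..n}. X j \<omega> * \<epsilon>\<^sup>2) \<partial>M)"
    by (intro Bochner_Integration.integral_cong) (simp_all add: sum_X sum_distrib_right[symmetric])
  also have "\<dots> = (\<Sum>j\<in>{m<..n}. \<integral>\<omega>. X j \<omega> * \<epsilon>\<^sup>2 \<partial>M)"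
    using integrable_X by (rule Bochner_Integration.integral_sum)
  also have "\<dots> \<le> (\<Sum>j\<in>{m<..n}. \<integral>\<omega>. X j \<omega> * (increment_sum m j \<omega>)\<^sup>2 \<partial>M)"
  proof (intro sum_mono integral_mono integrable_X integrable_X_sq)
    fix j \<omega>
    have "\<epsilon>\<^sup>2 \<le> (increment_sum m j \<omega>)\<^sup>2" if "\<epsilon> \<le> \<bar>increment_sum m j \<omega>\<bar>"
      using that \<open>0 < \<epsilon>\<close> by (metis abs_le_square_iff abs_of_pos)
    then show "X j \<omega> * \<epsilon>\<^sup>2 \<le> X j \<omega> * (increment_sum m j \<omega>)\<^sup>2"
      by (simp add: X_def first_exit_def increment_sum_of_history)
  qed
  also have "\<dots> \<le> (\<Sum>j\<in>{m<..n}. \<integral>\<omega>. X j \<omega> * (increment_sum m n \<omega>)\<^sup>2 \<partial>M)"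
    unfolding X_def by (intro sum_mono integral_sq_increment_sum_mono) auto
  also have "\<dots> = (\<integral>\<omega>. indicator E \<omega> * (increment_sum m n \<omega>)\<^sup>2 \<partial>M)"
    using integrable_X_sq
    by (simp add: Bochner_Integration.integral_sum[symmetric] sum_distrib_right[symmetric] sum_X
        cong: Bochner_Integration.integral_cong)
  also have "\<dots> \<le> (\<integral>\<omega>. (increment_sum m n \<omega>)\<^sup>2 \<partial>M)"
    using integrable_of_bool_sq_increment_sum[of "\<lambda>\<omega>. \<omega> \<in> E" m n]
      integrable_of_bool_sq_increment_sum[of "\<lambda>_. True" m n]
    by (intro integral_mono) (auto simp: indicator_def of_bool_def)
  also have "\<dots> = (\<Sum>k\<in>{m..<n}. \<integral>\<omega>. (increment k \<omega>)\<^sup>2 \<partial>M)"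
    using \<open>m \<le> n\<close> by (rule integral_increment_sum_sq)
  finally show ?thesis
    unfolding E_def .
qed

lemma prob_exists_increment_sum_ge:
  assumes summable: "summable (\<lambda>k. \<integral>\<omega>. (increment k \<omega>)\<^sup>2 \<partial>M)" and "0 < \<epsilon>"
  shows "prob {\<omega>\<in>space M. \<exists>j>m. \<epsilon> \<le> \<bar>increment_sum m j \<omega>\<bar>}
    \<le> (\<Sum>i. \<integral>\<omega>. (increment (i + m) \<omega>)\<^sup>2 \<partial>M) / \<epsilon>\<^sup>2"
proof -
  define A where "A n = {\<omega>\<in>space M. \<exists>j\<in>{m<..n}. \<epsilon> \<le> \<bar>increment_sum m j \<omega>\<bar>}" for n
  have nonneg: "0 \<le> (\<integral>\<omega>. (increment k \<omega>)\<^sup>2 \<partial>M)" for k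
    by simp
  have "prob (A n) \<le> (\<Sum>i. \<integral>\<omega>. (increment (i + m) \<omega>)\<^sup>2 \<partial>M) / \<epsilon>\<^sup>2" for n
  proof (cases "m \<le> n")
    case True
    have "(\<Sum>k\<in>{m..<n}. \<integral>\<omega>. (increment k \<omega>)\<^sup>2 \<partial>M) = (\<Sum>i<n - m. \<integral>\<omega>. (increment (i + m) \<omega>)\<^sup>2 \<partial>M)"
      by (rule sum.reindex_bij_witness[of _ "\<lambda>i. i + m" "\<lambda>k. k - m"]) auto
    also have "\<dots> \<le> (\<Sum>i. \<integral>\<omega>. (increment (i + m) \<omega>)\<^sup>2 \<partial>M)"
      using summable_ignore_initial_segment[OF summable] by (rule sum_le_suminf) (auto simp: nonneg)
    finally show ?thesis
      using kolmogorov_maximal_inequality[OF True \<open>0 < \<epsilon>\<close>] \<open>0 < \<epsilon>\<close>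
      by (simp add: A_def field_simps)
  next
    case False
    then have "A n = {}"
      by (auto simp: A_def)
    then show ?thesis
      using summable_ignore_initial_segment[OF summable] by (simp add: suminf_nonneg)
  qed
  moreover have "(\<lambda>n. prob (A n)) \<longlonglongrightarrow> prob (\<Union>n. A n)"
    by (rule finite_Lim_measure_incseq) (auto simp: A_def incseq_def)
  ultimately have "prob (\<Union>n. A n) \<le> (\<Sum>i. \<integral>\<omega>. (increment (i + m) \<omega>)\<^sup>2 \<partial>M) / \<epsilon>\<^sup>2"
    by (intro LIMSEQ_le_const2[of "\<lambda>n. prob (A n)"]) auto
  moreover have "(\<Union>n. A n) = {\<omega>\<in>space M. \<exists>j>m. \<epsilon> \<le> \<bar>increment_sum m j \<omega>\<bar>}"
    unfolding A_def by (auto; metis greaterThanAtMost_iff order_refl)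
  ultimately show ?thesis
    by simp
qed

theorem AE_summable_increment:
  assumes summable: "summable (\<lambda>k. \<integral>\<omega>. (increment k \<omega>)\<^sup>2 \<partial>M)"
  shows "AE \<omega> in M. summable (\<lambda>k. increment k \<omega>)"
proof -
  have "AE \<omega> in M. \<exists>m. \<forall>j>m. \<bar>increment_sum m j \<omega>\<bar> < \<epsilon>" if "0 < \<epsilon>" for \<epsilon>
  proof -
    define Bad where "Bad = {\<omega>\<in>space M. \<forall>m. \<exists>j>m. \<epsilon> \<le> \<bar>increment_sum m j \<omega>\<bar>}"
    have [measurable]: "Bad \<in> events"
      unfolding Bad_def by measurable
    have "prob Bad \<le> (\<Sum>i. \<integral>\<omega>. (increment (i + m) \<omega>)\<^sup>2 \<partial>M) / \<epsilon>\<^sup>2" for m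
      by (rule order.trans[OF finite_measure_mono prob_exists_increment_sum_ge[OF summable that]])
         (auto simp: Bad_def)
    moreover have "(\<lambda>m. (\<Sum>i. \<integral>\<omega>. (increment (i + m) \<omega>)\<^sup>2 \<partial>M) / \<epsilon>\<^sup>2) \<longlonglongrightarrow> 0 / \<epsilon>\<^sup>2"
      by (intro tendsto_divide tendsto_const suminf_exist_split2 summable) (use that in simp)
    ultimately have "prob Bad \<le> 0"
      by (intro LIMSEQ_le_const[of "\<lambda>m. _ m / \<epsilon>\<^sup>2"]) auto
    then have "Bad \<in> null_sets M"
      by (simp add: emeasure_eq_measure null_sets_def measure_le_0_iff)
    then show ?thesis
      by (rule AE_I') (auto simp: Bad_def not_less)
  qed
  then have "AE \<omega> in M. \<forall>r::nat. \<exists>m. \<forall>j>m. \<bar>increment_sum m j \<omega>\<bar> < 1 / Suc r"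
    by (subst AE_all_countable) auto
  then show ?thesis
  proof eventually_elim
    case (elim \<omega>)
    show ?case
    proof (rule summable_if_tails_small)
      fix e :: real assume "0 < e"
      then obtain r where r: "1 / Suc r < e"
        by (metis nat_approx_posE of_nat_Suc)
      then obtain m where "\<forall>j>m. \<bar>increment_sum m j \<omega>\<bar> < 1 / Suc r"
        using elim by blast
      then have "\<forall>j\<ge>m. \<bar>\<Sum>k\<in>{m..<j}. increment k \<omega>\<bar> < e"
        using r \<open>0 < e\<close> by (auto simp: increment_sum_def le_less)
      then show "\<exists>m. \<forall>j\<ge>m. \<bar>\<Sum>k\<in>{m..<j}. increment k \<omega>\<bar> < e" ..
    qed
  qed
qed

end

lemma (in prob_space) AE_exists_less_of_nat:
  fixes X :: "nat \<Rightarrow> 'a \<Rightarrow> real"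
  assumes [measurable]: "\<And>C. X C \<in> borel_measurable M"
    and integrable: "\<And>C. integrable M (X C)" and nonneg: "\<And>C. AE \<omega> in M. 0 \<le> X C \<omega>"
    and integral_le: "\<And>C. (\<integral>\<omega>. X C \<omega> \<partial>M) \<le> K"
  shows "AE \<omega> in M. \<exists>C. X C \<omega> < real C"
proof -
  define Bad where "Bad = {\<omega>\<in>space M. \<forall>C. real C \<le> X C \<omega>}"
  have [measurable]: "Bad \<in> events"
    unfolding Bad_def by measurable
  have "real C * prob Bad \<le> K" for C
  proof -
    have "real C * prob Bad = (\<integral>\<omega>. real C * indicator Bad \<omega> \<partial>M)"
      by simp
    also have "\<dots> \<le> (\<integral>\<omega>. X C \<omega> \<partial>M)"
    proof (rule integral_mono_AE)
      show "integrable M (\<lambda>\<omega>. real C * indicator Bad \<omega>)"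
        by (simp add: emeasure_eq_measure)
      show "AE \<omega> in M. real C * indicator Bad \<omega> \<le> X C \<omega>"
        using nonneg[of C] by eventually_elim (auto simp: Bad_def indicator_def)
    qed (rule integrable)
    finally show ?thesis
      using integral_le[of C] by simp
  qed
  then have "prob Bad = 0"
    by (metis reals_Archimedean3 measure_nonneg not_less order.antisym zero_less_measure_iff)
  then show ?thesis
    by (intro AE_I'[where N=Bad]) (auto simp: Bad_def null_sets_def emeasure_eq_measure not_less)
qed

context random_index_history
begin

definition doob_increment :: "(nat \<Rightarrow> 'z \<times> nat list \<Rightarrow> real) \<Rightarrow> nat \<Rightarrow> 'z \<times> nat list \<Rightarrow> real" where
  "doob_increment w k h = w (Suc k) h - next_mean (w (Suc k)) (truncate k h)"

lemma doob_increment_centered: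
  "length (snd h) = k \<Longrightarrow> next_mean (doob_increment w k) h = 0"
  unfolding doob_increment_def[abs_def] next_mean_diff
  by (simp add: next_mean_truncate[where c="next_mean (w (Suc k))"])

lemma doob_increment_history:
  "doob_increment w k (history (Suc k) \<omega>) = w (Suc k) (history (Suc k) \<omega>) - next_mean (w (Suc k)) (history k \<omega>)"
  by (simp add: doob_increment_def truncate_history)

text \<open>\<open>g\<close> is bounded when \<open>0 \<le> w \<le> C\<close>, so telescoping shows that the martingale part of a
  bounded supermartingale has square-summable increments.\<close>

lemma integral_sq_doob_increment_le:
  fixes w :: "nat \<Rightarrow> 'z \<times> nat list \<Rightarrow> real"
  assumes [measurable]: "\<And>k. w k \<in> borel_measurable history_space"
    and w_nonneg: "\<And>k h. 0 \<le> w k h" and w_le: "\<And>k h. w k h \<le> C"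
    and supermartingale: "\<And>k h. length (snd h) = k \<Longrightarrow> next_mean (w (Suc k)) h \<le> w k h"
  defines "g k \<equiv> (\<integral>\<omega>. (w k (history k \<omega>))\<^sup>2 \<partial>M) - 2 * C * (\<integral>\<omega>. w k (history k \<omega>) \<partial>M)"
  shows "(\<integral>\<omega>. (doob_increment w k (history (Suc k) \<omega>))\<^sup>2 \<partial>M) \<le> g (Suc k) - g k"
proof -
  define W where "W k \<omega> = w k (history k \<omega>)" for k \<omega>
  define q where "q h = next_mean (w (Suc k)) h" for h
  define Q where "Q \<omega> = q (history k \<omega>)" for \<omega>
  have q_nonneg: "0 \<le> q h" and q_le: "q h \<le> C" for h
    using next_mean_mono[of "\<lambda>_. 0" "w (Suc k)" h] next_mean_mono[of "w (Suc k)" "\<lambda>_. C" h]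
    by (auto simp: q_def next_mean_const w_nonneg w_le)
  have [measurable]: "q \<in> borel_measurable history_space"
    unfolding q_def by measurable
  have [measurable]: "W j \<in> borel_measurable M" "Q \<in> borel_measurable M" for j
    unfolding W_def Q_def by measurable
  have bound: "\<bar>a * b\<bar> \<le> C * C" "\<bar>a\<bar> \<le> C" if "0 \<le> a" "a \<le> C" "0 \<le> b" "b \<le> C" for a b :: real
    using that by (auto simp: abs_mult intro: mult_mono)
  have integrable[simp]: "integrable M (\<lambda>\<omega>. W j \<omega> * W j \<omega>)" "integrable M (\<lambda>\<omega>. W (Suc k) \<omega> * Q \<omega>)"
    "integrable M (\<lambda>\<omega>. Q \<omega> * Q \<omega>)" "integrable M (W j)" "integrable M Q" for j
    by (auto intro!: integrable_bounded bound w_nonneg w_le q_nonneg q_le simp: W_def Q_def)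
  have "\<bar>q (truncate k h) * w (Suc k) h\<bar> \<le> C * C" "\<bar>w (Suc k) h\<bar> \<le> C" for h
    by (auto intro!: bound w_nonneg w_le q_nonneg q_le)
  then have E_WQ: "(\<integral>\<omega>. W (Suc k) \<omega> * Q \<omega> \<partial>M) = (\<integral>\<omega>. Q \<omega> * Q \<omega> \<partial>M)"
    and E_W: "(\<integral>\<omega>. W (Suc k) \<omega> \<partial>M) = (\<integral>\<omega>. Q \<omega> \<partial>M)"
    using integral_history_Suc[of "\<lambda>h. q (truncate k h) * w (Suc k) h" "C * C" k]
      integral_history_Suc[of "w (Suc k)" C k]
    by (simp_all add: W_def Q_def truncate_history next_mean_mult_truncate truncate_full mult.commute
        flip: q_def)
  have "W k \<omega> * W k \<omega> - Q \<omega> * Q \<omega> \<le> 2 * C * (W k \<omega> - Q \<omega>)" for \<omega>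
  proof -
    have "Q \<omega> \<le> W k \<omega>"
      using supermartingale[of "history k \<omega>" k] by (simp add: W_def Q_def q_def)
    moreover have "W k \<omega> + Q \<omega> \<le> 2 * C"
      using w_le[of k "history k \<omega>"] q_le[of "history k \<omega>"] by (simp add: W_def Q_def)
    ultimately show ?thesis
      by (metis diff_ge_0_iff_ge mult_left_mono mult.commute square_diff_square_factored)
  qed
  then have "(\<integral>\<omega>. W k \<omega> * W k \<omega> - 2 * C * W k \<omega> + 2 * C * Q \<omega> \<partial>M) \<le> (\<integral>\<omega>. Q \<omega> * Q \<omega> \<partial>M)"
    by (intro integral_mono) (auto simp: algebra_simps)
  moreover have "(\<lambda>\<omega>. (doob_increment w k (history (Suc k) \<omega>))\<^sup>2)
      = (\<lambda>\<omega>. W (Suc k) \<omega> * W (Suc k) \<omega> - 2 * (W (Suc k) \<omega> * Q \<omega>) + Q \<omega> * Q \<omega>)"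
    by (simp add: doob_increment_history W_def Q_def q_def power2_eq_square algebra_simps)
  ultimately show ?thesis
    by (simp add: g_def W_def[symmetric] power2_eq_square E_WQ E_W)
qed

theorem AE_convergent_bounded_supermartingale:
  fixes w :: "nat \<Rightarrow> 'z \<times> nat list \<Rightarrow> real"
  assumes [measurable]: "\<And>k. w k \<in> borel_measurable history_space"
    and w_nonneg: "\<And>k h. 0 \<le> w k h" and w_le: "\<And>k h. w k h \<le> C"
    and supermartingale: "\<And>k h. length (snd h) = k \<Longrightarrow> next_mean (w (Suc k)) h \<le> w k h"
  shows "AE \<omega> in M. convergent (\<lambda>k. w k (history k \<omega>))"
proof -
  have next_mean_w: "0 \<le> next_mean (w k) h" "next_mean (w k) h \<le> C" for k h
    using next_mean_mono[of "\<lambda>_. 0" "w k" h] next_mean_mono[of "w k" "\<lambda>_. C" h]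
    by (auto simp: next_mean_const w_nonneg w_le)
  interpret D: bounded_martingale_differences M N Z U "doob_increment w" C
  proof
    show "doob_increment w k \<in> borel_measurable history_space" for k
      unfolding doob_increment_def[abs_def] by measurable
    show "\<bar>doob_increment w k h\<bar> \<le> C" for k h
      using w_nonneg[of "Suc k" h] w_le[of "Suc k" h] next_mean_w[of "Suc k" "truncate k h"]
      by (auto simp: doob_increment_def abs_le_iff)
  qed (rule doob_increment_centered)
  define g where "g k = (\<integral>\<omega>. (w k (history k \<omega>))\<^sup>2 \<partial>M) - 2 * C * (\<integral>\<omega>. w k (history k \<omega>) \<partial>M)" for k
  have abs_w: "\<bar>w k h\<bar> \<le> C" for k h
    using w_nonneg[of k h] w_le[of k h] by simp
  have integrable: "integrable M (\<lambda>\<omega>. w k (history k \<omega>))" "integrable M (\<lambda>\<omega>. (w k (history k \<omega>))\<^sup>2)" for k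
    by (rule integrable_bounded[where C=C], simp, rule abs_w)
       (rule integrable_bounded[where C="C\<^sup>2"], simp, simp add: power2_le_if_abs_le[OF abs_w])
  have "0 \<le> C"
    using order.trans[OF w_nonneg w_le] .
  have bounds: "(\<integral>\<omega>. (w k (history k \<omega>))\<^sup>2 \<partial>M) \<le> C\<^sup>2" "0 \<le> (\<integral>\<omega>. (w k (history k \<omega>))\<^sup>2 \<partial>M)"
    "0 \<le> 2 * C * (\<integral>\<omega>. w k (history k \<omega>) \<partial>M)" "2 * C * (\<integral>\<omega>. w k (history k \<omega>) \<partial>M) \<le> 2 * C * C"
    for k
    using \<open>0 \<le> C\<close>
    by (auto intro!: integral_le_const integral_ge_const integrable w_nonneg w_le mult_left_mono
        mult_nonneg_nonneg power2_le_if_abs_le[OF abs_w])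
  have "(\<integral>\<omega>. (D.increment k \<omega>)\<^sup>2 \<partial>M) \<le> g (Suc k) - g k" for k
    unfolding D.increment_def g_def
    by (rule integral_sq_doob_increment_le[where w=w]) (simp_all add: w_nonneg w_le supermartingale)
  then have "(\<Sum>k<n. \<integral>\<omega>. (D.increment k \<omega>)\<^sup>2 \<partial>M) \<le> (\<Sum>k<n. g (Suc k) - g k)" for n
    by (rule sum_mono)
  also have "(\<Sum>k<n. g (Suc k) - g k) \<le> C\<^sup>2 + 2 * C * C" for n
    using bounds[of n] bounds[of 0] unfolding sum_lessThan_telescope unfolding g_def by linarith
  finally have "(\<Sum>k<n. \<integral>\<omega>. (D.increment k \<omega>)\<^sup>2 \<partial>M) \<le> C\<^sup>2 + 2 * C * C" for n .
  then have "summable (\<lambda>k. \<integral>\<omega>. (D.increment k \<omega>)\<^sup>2 \<partial>M)"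
    by (intro summableI_nonneg_bounded) auto
  then have "AE \<omega> in M. summable (\<lambda>k. D.increment k \<omega>)"
    by (rule D.AE_summable_increment)
  then show ?thesis
  proof eventually_elim
    case (elim \<omega>)
    show ?case
      by (rule convergent_if_summable_compensated_increments[
            where Q="\<lambda>k. next_mean (w (Suc k)) (history k \<omega>)" and C=C])
         (use elim in \<open>auto simp: D.increment_def doob_increment_history w_nonneg w_le supermartingale\<close>)
  qed
qed

lemma integral_supermartingale_le:
  fixes w :: "nat \<Rightarrow> 'z \<times> nat list \<Rightarrow> real"
  assumes [measurable]: "\<And>k. w k \<in> borel_measurable history_space"
    and bounded: "\<And>k h. \<bar>w k h\<bar> \<le> C"
    and supermartingale: "\<And>k h. length (snd h) = k \<Longrightarrow> next_mean (w (Suc k)) h \<le> w k h"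
  shows "(\<integral>\<omega>. w k (history k \<omega>) \<partial>M) \<le> (\<integral>\<omega>. w 0 (history 0 \<omega>) \<partial>M)"
proof (induction k)
  case (Suc k)
  have "(\<integral>\<omega>. w (Suc k) (history (Suc k) \<omega>) \<partial>M) = (\<integral>\<omega>. next_mean (w (Suc k)) (history k \<omega>) \<partial>M)"
    by (rule integral_history_Suc[OF _ bounded]) simp
  also have "\<dots> \<le> (\<integral>\<omega>. w k (history k \<omega>) \<partial>M)"
    using bounded
    by (intro integral_mono integrable_bounded[where C=C] supermartingale abs_next_mean_le) auto
  finally show ?case
    using Suc by simp
qed simp

text \<open>Truncation at level \<open>C\<close> gives bounded supermartingales; their limits have expectation
  bounded independently of \<open>C\<close>, so almost surely the truncation is eventually inactive.\<close>

theorem AE_convergent_nonneg_supermartingale: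
  fixes w :: "nat \<Rightarrow> 'z \<times> nat list \<Rightarrow> real"
  assumes [measurable]: "\<And>k. w k \<in> borel_measurable history_space"
    and w_nonneg: "\<And>k h. 0 \<le> w k h"
    and supermartingale: "\<And>k h. length (snd h) = k \<Longrightarrow> next_mean (w (Suc k)) h \<le> w k h"
    and integrable_0: "integrable M (\<lambda>\<omega>. w 0 (history 0 \<omega>))"
  shows "AE \<omega> in M. convergent (\<lambda>k. w k (history k \<omega>))"
proof -
  define v where "v C k h = min (w k h) (real C)" for C :: nat and k h
  define L where "L C \<omega> = lim (\<lambda>k. v C k (history k \<omega>))" for C \<omega>
  have [measurable]: "v C k \<in> borel_measurable history_space" "L C \<in> borel_measurable M" for C k
    unfolding v_def L_def by measurable
  have v_nonneg: "0 \<le> v C k h" and v_le: "v C k h \<le> real C" for C k h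
    using w_nonneg[of k h] by (auto simp: v_def)
  then have abs_v: "\<bar>v C k h\<bar> \<le> real C" for C k h
    by simp
  have v_supermartingale: "next_mean (v C (Suc k)) h \<le> v C k h" if "length (snd h) = k" for C k h
  proof -
    have "next_mean (v C (Suc k)) h \<le> w k h"
      using next_mean_mono[of "v C (Suc k)" "w (Suc k)" h] supermartingale[OF that] by (simp add: v_def)
    moreover have "next_mean (v C (Suc k)) h \<le> real C"
      using next_mean_mono[of "v C (Suc k)" "\<lambda>_. real C" h] by (simp add: v_def next_mean_const)
    ultimately show ?thesis
      unfolding v_def[of C k h] by simp
  qed
  have "AE \<omega> in M. convergent (\<lambda>k. v C k (history k \<omega>))" for C
    by (rule AE_convergent_bounded_supermartingale[where w="v C" and C="real C"])
       (auto intro: v_nonneg v_le v_supermartingale)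
  then have AE_convergent: "AE \<omega> in M. \<forall>C. convergent (\<lambda>k. v C k (history k \<omega>))"
    by (subst AE_all_countable) auto
  have LIMSEQ_L: "AE \<omega> in M. (\<lambda>k. v C k (history k \<omega>)) \<longlonglongrightarrow> L C \<omega>" for C
    using AE_convergent by eventually_elim (simp add: L_def convergent_LIMSEQ_iff)
  have integrable_L: "integrable M (L C)" for C
    by (rule integrable_dominated_convergence[where w="\<lambda>_. real C" and s="\<lambda>k \<omega>. v C k (history k \<omega>)"])
       (use LIMSEQ_L abs_v in auto)
  have "(\<lambda>k. \<integral>\<omega>. v C k (history k \<omega>) \<partial>M) \<longlonglongrightarrow> (\<integral>\<omega>. L C \<omega> \<partial>M)" for C
    by (rule integral_dominated_convergence[where w="\<lambda>_. real C"]) (use LIMSEQ_L abs_v in auto)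
  moreover have "(\<integral>\<omega>. v C k (history k \<omega>) \<partial>M) \<le> (\<integral>\<omega>. w 0 (history 0 \<omega>) \<partial>M)" for C k
  proof -
    have "(\<integral>\<omega>. v C k (history k \<omega>) \<partial>M) \<le> (\<integral>\<omega>. v C 0 (history 0 \<omega>) \<partial>M)"
      by (rule integral_supermartingale_le[where w="v C"]) (auto intro: abs_v v_supermartingale)
    also have "\<dots> \<le> (\<integral>\<omega>. w 0 (history 0 \<omega>) \<partial>M)"
      by (intro integral_mono integrable_0 integrable_bounded[where C="real C"] abs_v) (auto simp: v_def)
    finally show ?thesis .
  qed
  ultimately have "(\<integral>\<omega>. L C \<omega> \<partial>M) \<le> (\<integral>\<omega>. w 0 (history 0 \<omega>) \<partial>M)" for C
    by (intro LIMSEQ_le_const2[of "\<lambda>k. \<integral>\<omega>. v C k (history k \<omega>) \<partial>M"]) auto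
  moreover have "AE \<omega> in M. 0 \<le> L C \<omega>" for C
    using LIMSEQ_L by eventually_elim (rule LIMSEQ_le_const, auto intro: v_nonneg)
  ultimately have "AE \<omega> in M. \<exists>C. L C \<omega> < real C"
    by (intro AE_exists_less_of_nat integrable_L) auto
  then show ?thesis
    using AE_convergent
  proof eventually_elim
    case (elim \<omega>)
    then obtain C where C: "L C \<omega> < real C"
      by blast
    have "(\<lambda>k. v C k (history k \<omega>)) \<longlonglongrightarrow> L C \<omega>"
      using elim by (simp add: L_def convergent_LIMSEQ_iff)
    then have "eventually (\<lambda>k. v C k (history k \<omega>) < real C) sequentially"
      using C by (rule order_tendstoD(2))
    then have "eventually (\<lambda>k. v C k (history k \<omega>) = w k (history k \<omega>)) sequentially"
      by eventually_elim (auto simp: v_def min_def split: if_splits)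
    then show ?case
      using elim(2) by (simp add: convergent_cong[symmetric])
  qed
qed

theorem robbins_siegmund:
  fixes V c :: "nat \<Rightarrow> 'z \<times> nat list \<Rightarrow> real" and a b :: "nat \<Rightarrow> real"
  assumes [measurable]: "\<And>k. V k \<in> borel_measurable history_space" "\<And>k. c k \<in> borel_measurable history_space"
    and V_nonneg: "\<And>k h. 0 \<le> V k h" and c_nonneg: "\<And>k h. 0 \<le> c k h"
    and a_nonneg: "\<And>k. 0 \<le> a k" and b_nonneg: "\<And>k. 0 \<le> b k" and "summable a" "summable b"
    and step: "\<And>k h. length (snd h) = k \<Longrightarrow> next_mean (V (Suc k)) h \<le> (1 + a k) * V k h + b k - c k h"
    and integrable: "integrable M (\<lambda>\<omega>. V 0 (history 0 \<omega>))"
  shows "AE \<omega> in M. convergent (\<lambda>k. V k (history k \<omega>)) \<and> summable (\<lambda>k. c k (history k \<omega>))"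
proof -
  define P where "P k = (\<Prod>j<k. 1 + a j)" for k
  define T where "T k = (\<Sum>j. b (j + k) / P (Suc (j + k)))" for k
  define W where "W k h = V k h / P k + (\<Sum>j<k. c j (truncate j h) / P (Suc j)) + T k" for k h
  have P_ge_1: "1 \<le> P k" and P_le: "P k \<le> exp (suminf a)" for k
    unfolding P_def using prod_one_plus_bounds[OF a_nonneg \<open>summable a\<close>] by auto
  have P_pos: "0 < P k" for k
    using P_ge_1[of k] by simp
  have P_Suc: "P (Suc k) = (1 + a k) * P k" for k
    by (simp add: P_def)
  have "convergent P"
    unfolding P_def[abs_def] using a_nonneg \<open>summable a\<close> by (rule convergent_prod_one_plus)
  have summable_tail: "summable (\<lambda>j. b j / P (Suc j))"
  proof (rule summable_comparison_test'[OF \<open>summable b\<close>])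
    show "norm (b j / P (Suc j)) \<le> b j" for j
      using b_nonneg[of j] P_ge_1[of "Suc j"] by (simp add: divide_le_eq mult_le_cancel_left1)
  qed
  then have T_lim: "T \<longlonglongrightarrow> 0"
    unfolding T_def by (rule suminf_exist_split2)
  have T_nonneg: "0 \<le> T k" for k
    unfolding T_def using summable_ignore_initial_segment[OF summable_tail, of k] b_nonneg P_ge_1
    by (intro suminf_nonneg) (auto intro: divide_nonneg_pos P_pos)
  have T_Suc: "T (Suc k) = T k - b k / P (Suc k)" for k
    using suminf_split_head[OF summable_ignore_initial_segment[OF summable_tail, of k]]
    by (simp add: T_def add.commute)
  have [measurable]: "W k \<in> borel_measurable history_space" for k
    unfolding W_def by measurable
  have W_nonneg: "0 \<le> W k h" for k h
    unfolding W_def using V_nonneg c_nonneg T_nonneg P_pos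
    by (intro add_nonneg_nonneg sum_nonneg divide_nonneg_pos) auto
  have "next_mean (W (Suc k)) h \<le> W k h" if len: "length (snd h) = k" for k h
  proof -
    have "next_mean (W (Suc k)) h
        = next_mean (V (Suc k)) h / P (Suc k) + (\<Sum>j<k. c j (truncate j h) / P (Suc j))
          + c k h / P (Suc k) + T (Suc k)"
      using len N_pos by (simp add: next_mean_def W_def truncate_snoc truncate_full
          sum.distrib sum_divide_distrib[symmetric] field_simps)
    also have "\<dots> \<le> ((1 + a k) * V k h + b k - c k h) / P (Suc k) + (\<Sum>j<k. c j (truncate j h) / P (Suc j))
          + c k h / P (Suc k) + T (Suc k)"
      using step[OF len] P_ge_1[of "Suc k"] by (intro add_right_mono divide_right_mono) auto
    also have "\<dots> = W k h"
      using P_ge_1[of k] a_nonneg[of k]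
      by (simp add: W_def P_Suc T_Suc add_divide_distrib diff_divide_distrib)
    finally show ?thesis .
  qed
  moreover have "integrable M (\<lambda>\<omega>. W 0 (history 0 \<omega>))"
    using integrable by (simp add: W_def P_def)
  ultimately have "AE \<omega> in M. convergent (\<lambda>k. W k (history k \<omega>))"
    by (intro AE_convergent_nonneg_supermartingale W_nonneg) auto
  then show ?thesis
  proof eventually_elim
    case (elim \<omega>)
    then show ?case
      using P_ge_1 P_le \<open>convergent P\<close> T_lim T_nonneg V_nonneg c_nonneg
      by (intro robbins_siegmund_path[where P=P and T=T])
         (auto simp: W_def truncate_history)
  qed
qed

end

section \<open>The \<open>\<lambda>\<close>-SAGA iteration\<close>

lemma norm_add3_power2_le:
  fixes a b c :: "'v::real_normed_vector"
  shows "(norm (a + b + c))\<^sup>2 \<le> 3 * ((norm a)\<^sup>2 + (norm b)\<^sup>2 + (norm c)\<^sup>2)"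
proof -
  have "(norm (a + b + c))\<^sup>2 \<le> (norm a + norm b + norm c)\<^sup>2"
    by (intro power_mono) (auto intro: order.trans[OF norm_triangle_ineq add_right_mono])
  also have "\<dots> \<le> 3 * ((norm a)\<^sup>2 + (norm b)\<^sup>2 + (norm c)\<^sup>2)"
    using sum_squares_bound[of "norm a" "norm b"] sum_squares_bound[of "norm b" "norm c"]
      sum_squares_bound[of "norm a" "norm c"]
    by (simp add: power2_eq_square algebra_simps)
  finally show ?thesis .
qed

lemma norm_diff_power2_le: "(norm (a - b))\<^sup>2 \<le> 2 * (norm a)\<^sup>2 + 2 * (norm b)\<^sup>2"
  for a b :: "'v::real_normed_vector"
proof -
  have "(norm (a - b))\<^sup>2 \<le> (norm a + norm b)\<^sup>2"
    by (intro power_mono norm_triangle_ineq4) simp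
  also have "\<dots> \<le> 2 * (norm a)\<^sup>2 + 2 * (norm b)\<^sup>2"
    using sum_squares_bound[of "norm a" "norm b"] by (simp add: power2_eq_square algebra_simps)
  finally show ?thesis .
qed

lemma sum_norm_power2_diff_mean_le:
  fixes b :: "nat \<Rightarrow> 'v::real_inner"
  assumes "finite I"
  defines "m \<equiv> (1 / real (card I)) *\<^sub>R (\<Sum>k\<in>I. b k)"
  shows "(\<Sum>k\<in>I. (norm (b k - m))\<^sup>2) \<le> (\<Sum>k\<in>I. (norm (b k))\<^sup>2)"
proof (cases "I = {}")
  case False
  let ?n = "real (card I)"
  have "?n > 0"
    using False assms(1) by (simp add: card_gt_0_iff)
  then have sum_b: "(\<Sum>k\<in>I. b k) = ?n *\<^sub>R m"
    by (simp add: m_def)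
  have "(\<Sum>k\<in>I. (norm (b k - m))\<^sup>2) = (\<Sum>k\<in>I. (norm (b k))\<^sup>2 - 2 * (b k \<bullet> m) + (norm m)\<^sup>2)"
    by (intro sum.cong refl) (simp add: power2_norm_eq_inner inner_diff_left inner_diff_right inner_commute)
  also have "\<dots> = (\<Sum>k\<in>I. (norm (b k))\<^sup>2) - 2 * ((\<Sum>k\<in>I. b k) \<bullet> m) + ?n * (norm m)\<^sup>2"
    by (simp add: sum.distrib sum_subtractf sum_distrib_left inner_sum_left)
  also have "\<dots> = (\<Sum>k\<in>I. (norm (b k))\<^sup>2) - ?n * (norm m)\<^sup>2"
    unfolding sum_b by (simp add: power2_norm_eq_inner)
  finally show ?thesis
    using \<open>?n > 0\<close> by simp
qed simp

lemma sum_norm_power2_diff_scaleR: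
  fixes d :: "nat \<Rightarrow> 'v::real_inner"
  shows "(\<Sum>k\<in>I. (norm (e - t *\<^sub>R d k))\<^sup>2)
    = real (card I) * (norm e)\<^sup>2 - 2 * t * (e \<bullet> (\<Sum>k\<in>I. d k)) + t\<^sup>2 * (\<Sum>k\<in>I. (norm (d k))\<^sup>2)"
proof -
  have "(\<Sum>k\<in>I. (norm (e - t *\<^sub>R d k))\<^sup>2) = (\<Sum>k\<in>I. (norm e)\<^sup>2 - 2 * t * (e \<bullet> d k) + t\<^sup>2 * (norm (d k))\<^sup>2)"
    by (intro sum.cong refl) (unfold power2_norm_eq_inner, simp add: inner_diff_left inner_diff_right
        inner_commute power2_eq_square algebra_simps)
  then show ?thesis
    by (simp add: sum.distrib sum_subtractf sum_distrib_left inner_sum_right)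
qed

lemma sum_fun_upd:
  fixes f :: "'b \<Rightarrow> nat \<Rightarrow> real"
  assumes "finite I" "k \<in> I"
  shows "(\<Sum>j\<in>I. f ((g(k := v)) j) j) = (\<Sum>j\<in>I. f (g j) j) - f (g k) k + f v k"
proof -
  have "(\<Sum>j\<in>I. f ((g(k := v)) j) j) = f v k + (\<Sum>j\<in>I - {k}. f ((g(k := v)) j) j)"
    using assms by (simp add: sum.remove)
  also have "(\<Sum>j\<in>I - {k}. f ((g(k := v)) j) j) = (\<Sum>j\<in>I - {k}. f (g j) j)"
    by (intro sum.cong refl) auto
  finally show ?thesis
    using sum.remove[OF assms, of "\<lambda>j. f (g j) j"] by simp
qed

text \<open>The direction of a SAGA step, centred at the optimum: the fresh gradient error, the
  memory error around its mean, and the gradient at the optimum.\<close>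

lemma sum_norm_power2_saga_direction_le:
  fixes a b c :: "nat \<Rightarrow> 'v::real_inner"
  assumes "finite I" "0 \<le> t" "t \<le> 1"
  defines "m \<equiv> (1 / real (card I)) *\<^sub>R (\<Sum>k\<in>I. b k)"
  shows "(\<Sum>k\<in>I. (norm (a k - t *\<^sub>R (b k - m) + (1 - t) *\<^sub>R c k))\<^sup>2)
    \<le> 3 * ((\<Sum>k\<in>I. (norm (a k))\<^sup>2) + (\<Sum>k\<in>I. (norm (b k))\<^sup>2) + (\<Sum>k\<in>I. (norm (c k))\<^sup>2))"
proof -
  have "(norm (a k - t *\<^sub>R (b k - m) + (1 - t) *\<^sub>R c k))\<^sup>2
      \<le> 3 * ((norm (a k))\<^sup>2 + (norm (b k - m))\<^sup>2 + (norm (c k))\<^sup>2)" for k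
  proof -
    have "(norm (a k - t *\<^sub>R (b k - m) + (1 - t) *\<^sub>R c k))\<^sup>2
        \<le> 3 * ((norm (a k))\<^sup>2 + (norm (- t *\<^sub>R (b k - m)))\<^sup>2 + (norm ((1 - t) *\<^sub>R c k))\<^sup>2)"
      using norm_add3_power2_le[of "a k" "- t *\<^sub>R (b k - m)" "(1 - t) *\<^sub>R c k"] by simp
    also have "\<dots> \<le> 3 * ((norm (a k))\<^sup>2 + (norm (b k - m))\<^sup>2 + (norm (c k))\<^sup>2)"
      using assms(2,3)
      by (intro mult_left_mono add_mono order.refl)
         (auto simp: power_mult_distrib power_le_one mult_left_le_one_le)
    finally show ?thesis .
  qed
  then have "(\<Sum>k\<in>I. (norm (a k - t *\<^sub>R (b k - m) + (1 - t) *\<^sub>R c k))\<^sup>2)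
      \<le> (\<Sum>k\<in>I. 3 * ((norm (a k))\<^sup>2 + (norm (b k - m))\<^sup>2 + (norm (c k))\<^sup>2))"
    by (rule sum_mono)
  also have "\<dots> = 3 * ((\<Sum>k\<in>I. (norm (a k))\<^sup>2) + (\<Sum>k\<in>I. (norm (b k - m))\<^sup>2) + (\<Sum>k\<in>I. (norm (c k))\<^sup>2))"
    by (simp add: sum.distrib sum_distrib_left)
  also have "\<dots> \<le> 3 * ((\<Sum>k\<in>I. (norm (a k))\<^sup>2) + (\<Sum>k\<in>I. (norm (b k))\<^sup>2) + (\<Sum>k\<in>I. (norm (c k))\<^sup>2))"
    using sum_norm_power2_diff_mean_le[OF assms(1), of b] by (simp add: m_def)
  finally show ?thesis .
qed

definition memory_error :: "nat \<Rightarrow> (nat \<Rightarrow> 'v \<Rightarrow> 'v::real_normed_vector) \<Rightarrow> 'v \<Rightarrow> (nat \<Rightarrow> 'v) \<Rightarrow> real" where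
  "memory_error N G x g = (1 / real N) * (\<Sum>k = 1..N. (norm (g k - G k x))\<^sup>2)"

lemma memory_error_nonneg: "0 \<le> memory_error N G x g"
  unfolding memory_error_def by (intro mult_nonneg_nonneg sum_nonneg) auto

lemma sum_memory_error_fun_upd:
  assumes "N \<ge> 1"
  shows "(\<Sum>k = 1..N. memory_error N G x\<^sub>0 (g(k := G k x)))
    = (real N - 1) * memory_error N G x\<^sub>0 g + (1 / real N) * (\<Sum>k = 1..N. (norm (G k x - G k x\<^sub>0))\<^sup>2)"
proof -
  have "memory_error N G x\<^sub>0 (g(k := G k x))
      = memory_error N G x\<^sub>0 g + ((norm (G k x - G k x\<^sub>0))\<^sup>2 - (norm (g k - G k x\<^sub>0))\<^sup>2) / real N"
    if "k \<in> {1..N}" for k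
  proof -
    have "(\<Sum>j = 1..N. (norm ((g(k := G k x)) j - G j x\<^sub>0))\<^sup>2)
        = (\<Sum>j = 1..N. (norm (g j - G j x\<^sub>0))\<^sup>2) - (norm (g k - G k x\<^sub>0))\<^sup>2 + (norm (G k x - G k x\<^sub>0))\<^sup>2"
      using sum_fun_upd[OF _ that, of "\<lambda>y j. (norm (y - G j x\<^sub>0))\<^sup>2" g "G k x"] by simp
    then show ?thesis
      unfolding memory_error_def by (simp add: add_divide_distrib diff_divide_distrib)
  qed
  then have "(\<Sum>k = 1..N. memory_error N G x\<^sub>0 (g(k := G k x)))
      = real N * memory_error N G x\<^sub>0 g
        + ((\<Sum>k = 1..N. (norm (G k x - G k x\<^sub>0))\<^sup>2) - (\<Sum>k = 1..N. (norm (g k - G k x\<^sub>0))\<^sup>2)) / real N"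
    by (simp add: sum.distrib sum_subtractf sum_divide_distrib[symmetric])
  then show ?thesis
    using assms by (simp add: memory_error_def field_simps)
qed

text \<open>The left-hand side is the mean, over the sampled index \<open>k\<close>, of the Lyapunov function
  after one step; \<open>\<gamma>'\<close> is the step size of the following iteration.\<close>

lemma saga_lyapunov_step:
  fixes G :: "nat \<Rightarrow> 'v::real_inner \<Rightarrow> 'v" and g :: "nat \<Rightarrow> 'v"
  assumes N: "N \<ge> 1" and lam: "0 \<le> lam" "lam \<le> 1" and crit: "avg_fun N G x\<^sub>0 = 0"
    and A3: "(1 / real N) * (\<Sum>k = 1..N. (norm (G k x - G k x\<^sub>0))\<^sup>2) \<le> L * (norm (x - x\<^sub>0))\<^sup>2"
    and L: "0 \<le> L" and \<gamma>: "0 \<le> \<gamma>" and \<gamma>': "0 \<le> \<gamma>'" "\<gamma>' \<le> \<gamma>"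
  defines "\<sigma>2 \<equiv> (1 / real N) * (\<Sum>k = 1..N. (norm (G k x\<^sub>0))\<^sup>2)"
  shows "(\<Sum>k = 1..N. (norm (x - \<gamma> *\<^sub>R (G k x - lam *\<^sub>R (g k - avg_fun N (\<lambda>j _. g j) x)) - x\<^sub>0))\<^sup>2
      + 3 * real N * \<gamma>'\<^sup>2 * memory_error N G x\<^sub>0 (g(k := G k x))) / real N
    \<le> (1 + 6 * L * \<gamma>\<^sup>2) * ((norm (x - x\<^sub>0))\<^sup>2 + 3 * real N * \<gamma>\<^sup>2 * memory_error N G x\<^sub>0 g)
      + 3 * \<sigma>2 * \<gamma>\<^sup>2 - 2 * \<gamma> * ((x - x\<^sub>0) \<bullet> avg_fun N G x)"
proof -
  define n where "n = real N"
  define I where "I = {1..N}"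
  define e where "e = x - x\<^sub>0"
  define h where "h = avg_fun N G x"
  define S where "S = memory_error N G x\<^sub>0 g"
  define D where "D k = g k - G k x\<^sub>0" for k
  define Dm where "Dm = (1 / n) *\<^sub>R (\<Sum>k\<in>I. D k)"
  define d where "d k = G k x - lam *\<^sub>R (g k - Dm)" for k
  have n: "0 < n" "card I = N" "finite I"
    using N by (auto simp: n_def I_def)
  have sum_G_x0: "(\<Sum>k\<in>I. G k x\<^sub>0) = 0"
    using crit n by (simp add: avg_fun_def I_def n_def)
  then have avg_g: "avg_fun N (\<lambda>j _. g j) x = Dm"
    by (simp add: avg_fun_def Dm_def D_def I_def n_def sum_subtractf)
  have d_split: "d k = (G k x - G k x\<^sub>0) - lam *\<^sub>R (D k - Dm) + (1 - lam) *\<^sub>R G k x\<^sub>0" for k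
    by (simp add: d_def D_def algebra_simps)
  have "(\<Sum>k\<in>I. d k) = (\<Sum>k\<in>I. G k x) - lam *\<^sub>R ((\<Sum>k\<in>I. g k) - n *\<^sub>R Dm)"
    using n by (simp add: d_def sum_subtractf scaleR_sum_right scaleR_diff_right n_def sum_constant_scaleR)
  then have sum_d: "(\<Sum>k\<in>I. d k) = n *\<^sub>R h"
    using n sum_G_x0 by (simp add: Dm_def D_def sum_subtractf h_def avg_fun_def I_def n_def)
  have sum_A3: "(\<Sum>k\<in>I. (norm (G k x - G k x\<^sub>0))\<^sup>2) \<le> n * L * (norm e)\<^sup>2"
    using A3 n by (simp add: I_def e_def n_def field_simps)
  have sum_D: "(\<Sum>k\<in>I. (norm (D k))\<^sup>2) = n * S"
    using n by (simp add: S_def memory_error_def D_def I_def n_def)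
  have "Dm = (1 / real (card I)) *\<^sub>R (\<Sum>k\<in>I. D k)"
    using n by (simp add: Dm_def n_def)
  then have "(\<Sum>k\<in>I. (norm (d k))\<^sup>2) \<le> 3 * ((\<Sum>k\<in>I. (norm (G k x - G k x\<^sub>0))\<^sup>2)
      + (\<Sum>k\<in>I. (norm (D k))\<^sup>2) + (\<Sum>k\<in>I. (norm (G k x\<^sub>0))\<^sup>2))"
    unfolding d_split by (simp only: sum_norm_power2_saga_direction_le[OF n(3) lam])
  moreover have "(\<Sum>k\<in>I. (norm (G k x\<^sub>0))\<^sup>2) = n * \<sigma>2"
    using n by (simp add: \<sigma>2_def I_def n_def)
  ultimately have "(\<Sum>k\<in>I. (norm (d k))\<^sup>2) \<le> 3 * (n * L * (norm e)\<^sup>2 + n * S + n * \<sigma>2)"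
    using sum_A3 sum_D by simp
  then have step_part: "(\<Sum>k\<in>I. (norm (e - \<gamma> *\<^sub>R d k))\<^sup>2)
      \<le> n * (norm e)\<^sup>2 - 2 * \<gamma> * n * (e \<bullet> h) + \<gamma>\<^sup>2 * (3 * (n * L * (norm e)\<^sup>2 + n * S + n * \<sigma>2))"
    unfolding sum_norm_power2_diff_scaleR sum_d using n by (simp add: mult_left_mono n_def)
  have "(\<Sum>k\<in>I. memory_error N G x\<^sub>0 (g(k := G k x))) \<le> (n - 1) * S + L * (norm e)\<^sup>2"
    using sum_memory_error_fun_upd[OF N, of G x\<^sub>0 g x] A3 by (simp add: I_def n_def S_def e_def)
  then have memory_part: "3 * n * \<gamma>'\<^sup>2 * (\<Sum>k\<in>I. memory_error N G x\<^sub>0 (g(k := G k x)))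
      \<le> 3 * n * \<gamma>\<^sup>2 * ((n - 1) * S + L * (norm e)\<^sup>2)"
    using n \<gamma>' N L memory_error_nonneg[of N G x\<^sub>0 g]
    by (intro mult_mono power_mono) (auto simp: S_def n_def intro!: add_nonneg_nonneg sum_nonneg memory_error_nonneg)
  have "x - \<gamma> *\<^sub>R (G k x - lam *\<^sub>R (g k - avg_fun N (\<lambda>j _. g j) x)) - x\<^sub>0 = e - \<gamma> *\<^sub>R d k" for k
    by (simp add: avg_g d_def e_def algebra_simps)
  then have "(\<Sum>k = 1..N. (norm (x - \<gamma> *\<^sub>R (G k x - lam *\<^sub>R (g k - avg_fun N (\<lambda>j _. g j) x)) - x\<^sub>0))\<^sup>2
      + 3 * real N * \<gamma>'\<^sup>2 * memory_error N G x\<^sub>0 (g(k := G k x))) / real N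
    = ((\<Sum>k\<in>I. (norm (e - \<gamma> *\<^sub>R d k))\<^sup>2) + 3 * n * \<gamma>'\<^sup>2 * (\<Sum>k\<in>I. memory_error N G x\<^sub>0 (g(k := G k x)))) / n"
    by (simp add: I_def n_def sum.distrib sum_distrib_left)
  also have "\<dots> \<le> (n * (norm e)\<^sup>2 - 2 * \<gamma> * n * (e \<bullet> h) + \<gamma>\<^sup>2 * (3 * (n * L * (norm e)\<^sup>2 + n * S + n * \<sigma>2))
      + 3 * n * \<gamma>\<^sup>2 * ((n - 1) * S + L * (norm e)\<^sup>2)) / n"
    using step_part memory_part n by (intro divide_right_mono add_mono) auto
  also have "\<dots> \<le> (1 + 6 * L * \<gamma>\<^sup>2) * ((norm e)\<^sup>2 + 3 * n * \<gamma>\<^sup>2 * S) + 3 * \<sigma>2 * \<gamma>\<^sup>2 - 2 * \<gamma> * (e \<bullet> h)"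
  proof -
    have "0 \<le> L * (\<gamma> * (\<gamma> * (\<gamma> * (\<gamma> * (n * (n * S))))))"
      using n L \<gamma> memory_error_nonneg[of N G x\<^sub>0 g] by (intro mult_nonneg_nonneg) (auto simp: S_def)
    then show ?thesis
      using n by (simp add: field_simps power2_eq_square)
  qed
  finally show ?thesis
    by (simp add: e_def h_def S_def n_def)
qed

lemma saga_state_Suc':
  "saga_state N G lam gam x0 x1 u (Suc m) =
    (let x = fst (saga_state N G lam gam x0 x1 u m); g = snd (saga_state N G lam gam x0 x1 u m);
         k = u (m + 2)
     in (x - gam (Suc m) *\<^sub>R (G k x - lam *\<^sub>R (g k - avg_fun N (\<lambda>j _. g j) x)), g(k := G k x)))"
  by (simp add: Let_def split: prod.split)

lemma saga_state_cong:
  assumes "\<And>i. 2 \<le> i \<Longrightarrow> i \<le> m + 1 \<Longrightarrow> u i = u' i"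
  shows "saga_state N G lam gam x0 x1 u m = saga_state N G lam gam x0 x1 u' m"
  using assms by (induction m) (auto simp: Let_def)

context
  fixes N :: nat and G :: "nat \<Rightarrow> 'v::real_normed_vector \<Rightarrow> 'v" and x\<^sub>0 :: 'v and L :: real
  assumes A3: "\<And>x. (1 / real N) * (\<Sum>k = 1..N. (norm (G k x - G k x\<^sub>0))\<^sup>2) \<le> L * (norm (x - x\<^sub>0))\<^sup>2"
begin

lemma norm_gradient_diff_power2_le:
  assumes "k \<in> {1..N}"
  shows "(norm (G k x - G k x\<^sub>0))\<^sup>2 \<le> real N * L * (norm (x - x\<^sub>0))\<^sup>2"
proof -
  have "(norm (G k x - G k x\<^sub>0))\<^sup>2 \<le> (\<Sum>j = 1..N. (norm (G j x - G j x\<^sub>0))\<^sup>2)"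
    using assms by (intro member_le_sum) auto
  also have "\<dots> \<le> real N * L * (norm (x - x\<^sub>0))\<^sup>2"
    using A3[of x] assms by (simp add: field_simps)
  finally show ?thesis .
qed

lemma memory_error_gradients_le: "memory_error N G x\<^sub>0 (\<lambda>k. G k x) \<le> L * (norm (x - x\<^sub>0))\<^sup>2"
  using A3 by (simp add: memory_error_def)

text \<open>The memory only stores gradients at past iterates, so it stays bounded as long as
  the iterates do.\<close>

lemma memory_error_saga_state_le:
  assumes "0 \<le> L" and R: "(norm (x_init - x\<^sub>0))\<^sup>2 \<le> R"
    "\<And>m. (norm (fst (saga_state N G lam gam x_init x1 u m) - x\<^sub>0))\<^sup>2 \<le> R"
  shows "memory_error N G x\<^sub>0 (snd (saga_state N G lam gam x_init x1 u m)) \<le> real N * L * R"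
proof -
  have "\<forall>k\<in>{1..N}. (norm (snd (saga_state N G lam gam x_init x1 u m) k - G k x\<^sub>0))\<^sup>2 \<le> real N * L * R"
  proof (induction m)
    case 0
    have "(norm (G k x_init - G k x\<^sub>0))\<^sup>2 \<le> real N * L * R" if "k \<in> {1..N}" for k
      using norm_gradient_diff_power2_le[OF that, of x_init] mult_left_mono[OF R(1), of "real N * L"] \<open>0 \<le> L\<close>
      by simp
    then show ?case
      by simp
  next
    case (Suc m)
    have "(norm (G k y - G k x\<^sub>0))\<^sup>2 \<le> real N * L * R"
      if "k \<in> {1..N}" "y = fst (saga_state N G lam gam x_init x1 u m)" for k y
      using norm_gradient_diff_power2_le[OF that(1), of y] mult_left_mono[OF R(2)[of m], of "real N * L"]
        \<open>0 \<le> L\<close> that(2) by simp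
    then show ?case
      using Suc by (auto simp: Let_def split: prod.split)
  qed
  then have "memory_error N G x\<^sub>0 (snd (saga_state N G lam gam x_init x1 u m)) \<le> (1 / real N) * (\<Sum>k = 1..N. real N * L * R)"
    unfolding memory_error_def by (intro mult_left_mono sum_mono) auto
  then show ?thesis
    by (simp split: if_splits)
qed

end

lemma saga_state_tendsto:
  fixes G :: "nat \<Rightarrow> 'v::euclidean_space \<Rightarrow> 'v" and N :: nat and lam :: real and gam :: "nat \<Rightarrow> real"
    and x_init x1 :: 'v and u :: "nat \<Rightarrow> nat"
  defines "x \<equiv> \<lambda>m. fst (saga_state N G lam gam x_init x1 u m)"
    and "g \<equiv> \<lambda>m. snd (saga_state N G lam gam x_init x1 u m)"
  assumes A3: "\<And>y. (1 / real N) * (\<Sum>k = 1..N. (norm (G k y - G k x\<^sub>0))\<^sup>2) \<le> L * (norm (y - x\<^sub>0))\<^sup>2"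
    and "0 \<le> L" and h_cont: "continuous_on UNIV (avg_fun N G)"
    and drift_pos: "\<And>y. y \<noteq> x\<^sub>0 \<Longrightarrow> 0 < (y - x\<^sub>0) \<bullet> avg_fun N G y"
    and gam_pos: "\<And>n. n \<ge> 1 \<Longrightarrow> gam n > 0" and gam_lim: "gam \<longlonglongrightarrow> 0" and gam_sum: "\<not> summable gam"
    and lyapunov: "convergent (\<lambda>m. (norm (x m - x\<^sub>0))\<^sup>2 + 3 * real N * (gam (Suc m))\<^sup>2 * memory_error N G x\<^sub>0 (g m))"
    and drift: "summable (\<lambda>m. 2 * gam (Suc m) * ((x m - x\<^sub>0) \<bullet> avg_fun N G (x m)))"
  shows "x \<longlonglongrightarrow> x\<^sub>0"
proof -
  define V where "V m = (norm (x m - x\<^sub>0))\<^sup>2 + 3 * real N * (gam (Suc m))\<^sup>2 * memory_error N G x\<^sub>0 (g m)" for m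
  obtain K where K: "\<And>m. \<bar>V m\<bar> \<le> K"
    using convergent_imp_Bseq[OF lyapunov] by (auto simp: Bseq_def V_def)
  have memory_term_nonneg: "0 \<le> 3 * real N * (gam (Suc m))\<^sup>2 * memory_error N G x\<^sub>0 (g m)" for m
    by (intro mult_nonneg_nonneg memory_error_nonneg) auto
  define R where "R = max ((norm (x_init - x\<^sub>0))\<^sup>2) K"
  have "(norm (x m - x\<^sub>0))\<^sup>2 \<le> K" for m
    using K[of m] memory_term_nonneg[of m] unfolding V_def by linarith
  then have "(norm (fst (saga_state N G lam gam x_init x1 u m) - x\<^sub>0))\<^sup>2 \<le> R" for m
    unfolding R_def x_def by (rule max.coboundedI2)
  then have memory_le: "memory_error N G x\<^sub>0 (g m) \<le> real N * L * R" for m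
    unfolding g_def by (intro memory_error_saga_state_le[OF A3 \<open>0 \<le> L\<close>]) (simp_all add: R_def)
  have "(\<lambda>m. (gam (Suc m))\<^sup>2) \<longlonglongrightarrow> 0"
    using tendsto_power[OF LIMSEQ_Suc[OF gam_lim], of 2] by simp
  then have bound_lim: "(\<lambda>m. 3 * real N * (gam (Suc m))\<^sup>2 * (real N * L * R)) \<longlonglongrightarrow> 0"
    by (rule tendsto_mult_left_zero[OF tendsto_mult_right_zero])
  have "eventually (\<lambda>m. 0 \<le> 3 * real N * (gam (Suc m))\<^sup>2 * memory_error N G x\<^sub>0 (g m)) sequentially"
    by (intro always_eventually allI memory_term_nonneg)
  moreover have "eventually (\<lambda>m. 3 * real N * (gam (Suc m))\<^sup>2 * memory_error N G x\<^sub>0 (g m)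
      \<le> 3 * real N * (gam (Suc m))\<^sup>2 * (real N * L * R)) sequentially"
    by (intro always_eventually allI mult_left_mono memory_le) simp
  ultimately have "(\<lambda>m. 3 * real N * (gam (Suc m))\<^sup>2 * memory_error N G x\<^sub>0 (g m)) \<longlonglongrightarrow> 0"
    by (rule real_tendsto_sandwich[OF _ _ tendsto_const bound_lim])
  moreover have "V \<longlonglongrightarrow> lim V"
    using lyapunov by (simp add: V_def[abs_def] convergent_LIMSEQ_iff)
  ultimately have "(\<lambda>m. V m - 3 * real N * (gam (Suc m))\<^sup>2 * memory_error N G x\<^sub>0 (g m)) \<longlonglongrightarrow> lim V - 0"
    by (intro tendsto_diff)
  then have "(\<lambda>m. (norm (x m - x\<^sub>0))\<^sup>2) \<longlonglongrightarrow> lim V"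
    by (simp add: V_def)
  moreover have "summable (\<lambda>m. gam (Suc m) * ((x m - x\<^sub>0) \<bullet> avg_fun N G (x m)))"
    using summable_divide[OF drift, of 2] by (simp add: mult.assoc)
  moreover have "\<not> summable (\<lambda>m. gam (Suc m))"
    using gam_sum summable_Suc_iff by blast
  ultimately show ?thesis
    using gam_pos by (intro tendsto_of_summable_drift[OF h_cont drift_pos]) auto
qed

lemma borel_measurable_gradient:
  fixes F :: "'v::euclidean_space \<Rightarrow> real" and G :: "'v \<Rightarrow> 'v"
  assumes has_derivative: "\<And>x. (F has_derivative (\<lambda>h. G x \<bullet> h)) (at x)"
  shows "G \<in> borel_measurable borel"
proof -
  have "continuous_on UNIV F"
    using has_derivative has_derivative_continuous by (blast intro: continuous_at_imp_continuous_on)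
  then have [measurable]: "F \<in> borel_measurable borel"
    by (rule borel_measurable_continuous_onI)
  have [measurable]: "(\<lambda>x. G x \<bullet> b) \<in> borel_measurable borel" for b
  proof (rule borel_measurable_LIMSEQ_metric[where
        f="\<lambda>n x. (F (x + inverse (real (Suc n)) *\<^sub>R b) - F x) / inverse (real (Suc n))"])
    fix x
    have "((\<lambda>t::real. x + t *\<^sub>R b) has_derivative (\<lambda>t. t *\<^sub>R b)) (at 0)"
      by (auto intro!: derivative_eq_intros)
    from has_derivative_compose[OF this, of F "\<lambda>h. G x \<bullet> h"]
    have "((\<lambda>t. F (x + t *\<^sub>R b)) has_derivative (\<lambda>t. t * (G x \<bullet> b))) (at 0)"
      using has_derivative[of x] by simp
    moreover have "(\<lambda>t. t * (G x \<bullet> b)) = (*) (G x \<bullet> b)"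
      by (auto simp: fun_eq_iff)
    ultimately have "((\<lambda>t. F (x + t *\<^sub>R b)) has_field_derivative (G x \<bullet> b)) (at 0)"
      by (simp add: has_field_derivative_def)
    then have "((\<lambda>t. (F (x + t *\<^sub>R b) - F x) / t) \<longlongrightarrow> G x \<bullet> b) (at 0)"
      using has_field_derivative_iff[THEN iffD1] by fastforce
    moreover have "filterlim (\<lambda>n. inverse (real (Suc n))) (at 0) sequentially"
      by (intro filterlim_atI LIMSEQ_inverse_real_of_nat) auto
    ultimately show "(\<lambda>n. (F (x + inverse (real (Suc n)) *\<^sub>R b) - F x) / inverse (real (Suc n)))
        \<longlonglongrightarrow> G x \<bullet> b"
      by (rule filterlim_compose)
  qed measurable
  have "G = (\<lambda>x. \<Sum>b\<in>Basis. (G x \<bullet> b) *\<^sub>R b)"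
    by (simp add: euclidean_representation)
  then show ?thesis
    by (subst \<open>G = _\<close>) measurable
qed

locale saga_iteration = random_index_history M N X U
  for M :: "'a measure" and N and X :: "'a \<Rightarrow> 'v::euclidean_space \<times> 'v" and U +
  fixes G :: "nat \<Rightarrow> 'v \<Rightarrow> 'v" and lam :: real and gam :: "nat \<Rightarrow> real" and xstar :: 'v and L :: real
  assumes G_measurable: "\<And>k. k \<in> {1..N} \<Longrightarrow> G k \<in> borel_measurable borel"
    and lam: "0 \<le> lam" "lam \<le> 1"
    and gam_pos: "\<And>n. n \<ge> 1 \<Longrightarrow> gam n > 0"
    and gam_decr: "\<And>n. n \<ge> 1 \<Longrightarrow> gam (Suc n) \<le> gam n"
    and gam_sq: "summable (\<lambda>n. (gam n)\<^sup>2)"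
    and crit: "avg_fun N G xstar = 0"
    and drift_pos: "\<And>x. x \<noteq> xstar \<Longrightarrow> (x - xstar) \<bullet> avg_fun N G x > 0"
    and L: "0 \<le> L"
    and A3: "\<And>x. (1 / real N) * (\<Sum>k = 1..N. (norm (G k x - G k xstar))\<^sup>2) \<le> L * (norm (x - xstar))\<^sup>2"
    and X_integrable: "integrable M (\<lambda>\<omega>. (norm (fst (X \<omega>)))\<^sup>2)" "integrable M (\<lambda>\<omega>. (norm (snd (X \<omega>)))\<^sup>2)"
begin

text \<open>Indices outside \<open>{1..N}\<close> occur with probability zero; replacing them by \<open>1\<close> makes the
  state a measurable function of the history.\<close>

definition index_at :: "nat list \<Rightarrow> nat \<Rightarrow> nat" where
  "index_at l i = (if l ! (i - 2) \<in> {1..N} then l ! (i - 2) else 1)"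

definition state :: "nat \<Rightarrow> ('v \<times> 'v) \<times> nat list \<Rightarrow> 'v \<times> (nat \<Rightarrow> 'v)" where
  "state m h = saga_state N G lam gam (fst (fst h)) (snd (fst h)) (index_at (snd h)) m"

lemma index_at_in_range: "index_at l i \<in> {1..N}"
  using N_ge_1 by (simp add: index_at_def)

lemma state_0: "state 0 h = (snd (fst h), \<lambda>k. G k (fst (fst h)))"
  by (simp add: state_def)

lemma state_snoc:
  assumes "length l = m" "i \<in> {1..N}"
  shows "state (Suc m) (z, l @ [i])
    = (let x = fst (state m (z, l)); g = snd (state m (z, l))
       in (x - gam (Suc m) *\<^sub>R (G i x - lam *\<^sub>R (g i - avg_fun N (\<lambda>j _. g j) x)), g(i := G i x)))"
proof -
  have "saga_state N G lam gam (fst z) (snd z) (index_at (l @ [i])) m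
      = saga_state N G lam gam (fst z) (snd z) (index_at l) m"
    by (rule saga_state_cong) (use assms in \<open>auto simp: index_at_def nth_append\<close>)
  moreover have "index_at (l @ [i]) (m + 2) = i"
    using assms by (simp add: index_at_def nth_append)
  ultimately show ?thesis
    unfolding state_def saga_state_Suc' by simp
qed

lemma saga_state_eq_state_history:
  assumes "\<forall>n\<ge>2. U n \<omega> \<in> {1..N}"
  shows "saga_state N G lam gam (fst (X \<omega>)) (snd (X \<omega>)) (\<lambda>n. U n \<omega>) m = state m (history m \<omega>)"
  unfolding state_def history_def index_list_def fst_conv snd_conv
  by (rule saga_state_cong) (use assms in \<open>auto simp: index_at_def intro!: arg_cong[where f="\<lambda>n. U n \<omega>"]\<close>)

lemma measurable_history_space_if_slices:
  fixes f :: "('v \<times> 'v) \<times> nat list \<Rightarrow> real"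
  assumes "\<And>l. (\<lambda>z. f (z, l)) \<in> borel_measurable borel"
  shows "f \<in> borel_measurable history_space"
proof -
  have "(\<lambda>h. (\<lambda>l z. f (z, l)) (snd h) (fst h)) \<in> borel_measurable history_space"
  proof (rule measurable_compose_countable[where g=snd])
    show "(\<lambda>h. f (fst h, l)) \<in> borel_measurable history_space" for l
      using assms[of l] unfolding history_space_def by measurable
  qed (simp add: history_space_def)
  then show ?thesis
    by simp
qed

lemma fst_borel_measurable[measurable]: "fst \<in> measurable (borel :: ('v \<times> 'v) measure) borel"
  and snd_borel_measurable[measurable]: "snd \<in> measurable (borel :: ('v \<times> 'v) measure) borel"
  by (intro borel_measurable_continuous_onI continuous_on_fst continuous_on_snd continuous_on_id)+

lemma saga_state_measurable:
  assumes "\<And>i. u i \<in> {1..N}"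
  shows "(\<lambda>z. fst (saga_state N G lam gam (fst z) (snd z) u m)) \<in> borel_measurable borel
    \<and> (\<forall>k\<in>{1..N}. (\<lambda>z. snd (saga_state N G lam gam (fst z) (snd z) u m) k) \<in> borel_measurable borel)"
proof (induction m)
  case 0
  have "(\<lambda>z::'v \<times> 'v. G k (fst z)) \<in> borel_measurable borel" if "k \<in> {1..N}" for k
    using measurable_compose[OF fst_borel_measurable G_measurable[OF that]] by (simp add: o_def)
  then show ?case
    by simp
next
  case (Suc m)
  define x where "x z = fst (saga_state N G lam gam (fst z) (snd z) u m)" for z :: "'v \<times> 'v"
  define g where "g k z = snd (saga_state N G lam gam (fst z) (snd z) u m) k" for k and z :: "'v \<times> 'v"
  define i where "i = u (m + 2)"
  have [measurable]: "x \<in> borel_measurable borel"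
    using Suc unfolding x_def by simp
  have g_measurable: "g k \<in> borel_measurable borel" if "k \<in> {1..N}" for k
    using Suc that unfolding g_def by simp
  have i: "i \<in> {1..N}"
    using assms by (simp add: i_def)
  note [measurable] = G_measurable[OF i] g_measurable[OF i]
  have G_x: "(\<lambda>z. G k (x z)) \<in> borel_measurable borel" if "k \<in> {1..N}" for k
    using G_measurable[OF that] by measurable
  have [measurable]: "(\<lambda>z. avg_fun N (\<lambda>j _. g j z) (x z)) \<in> borel_measurable borel"
    unfolding avg_fun_def using g_measurable by measurable
  have "(\<lambda>z. x z - gam (Suc m) *\<^sub>R (G i (x z) - lam *\<^sub>R (g i z - avg_fun N (\<lambda>j _. g j z) (x z))))
      \<in> borel_measurable borel"
    by measurable
  moreover have "(\<lambda>z. ((\<lambda>k. g k z)(i := G i (x z))) k) \<in> borel_measurable borel" if "k \<in> {1..N}" for k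
    using g_measurable[OF that] G_x[OF that] by (cases "k = i") auto
  ultimately show ?case
    unfolding saga_state_Suc' Let_def x_def[symmetric] g_def[symmetric] i_def[symmetric]
    by (simp add: x_def g_def)
qed

lemma state_measurable:
  "(\<lambda>z. fst (state m (z, l))) \<in> borel_measurable borel"
  "k \<in> {1..N} \<Longrightarrow> (\<lambda>z. snd (state m (z, l)) k) \<in> borel_measurable borel"
  using saga_state_measurable[of "index_at l" m, OF index_at_in_range] unfolding state_def by auto

definition lyapunov :: "nat \<Rightarrow> ('v \<times> 'v) \<times> nat list \<Rightarrow> real" where
  "lyapunov m h = (norm (fst (state m h) - xstar))\<^sup>2
    + 3 * real N * (gam (Suc m))\<^sup>2 * memory_error N G xstar (snd (state m h))"

definition drift :: "nat \<Rightarrow> ('v \<times> 'v) \<times> nat list \<Rightarrow> real" where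
  "drift m h = 2 * gam (Suc m) * ((fst (state m h) - xstar) \<bullet> avg_fun N G (fst (state m h)))"

lemma lyapunov_nonneg: "0 \<le> lyapunov m h"
  unfolding lyapunov_def by (intro add_nonneg_nonneg mult_nonneg_nonneg memory_error_nonneg) auto

lemma drift_nonneg: "0 \<le> drift m h"
  using drift_pos[of "fst (state m h)"] gam_pos[of "Suc m"]
  by (cases "fst (state m h) = xstar") (auto simp: drift_def)

lemma lyapunov_slice_measurable:
  "(\<lambda>z. lyapunov m (z, l)) \<in> borel_measurable borel" "(\<lambda>z. drift m (z, l)) \<in> borel_measurable borel"
proof -
  have [measurable]: "avg_fun N G \<in> borel_measurable borel"
    unfolding avg_fun_def[abs_def] using G_measurable by measurable
  define x where "x z = fst (state m (z, l))" for z
  define e where "e z = memory_error N G xstar (snd (state m (z, l)))" for z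
  have [measurable]: "x \<in> borel_measurable borel" "e \<in> borel_measurable borel"
    unfolding x_def e_def memory_error_def using state_measurable by measurable
  show "(\<lambda>z. lyapunov m (z, l)) \<in> borel_measurable borel" "(\<lambda>z. drift m (z, l)) \<in> borel_measurable borel"
    unfolding lyapunov_def drift_def x_def[symmetric] e_def[symmetric] by measurable
qed

lemma lyapunov_measurable[measurable]: "lyapunov m \<in> borel_measurable history_space"
  and drift_measurable[measurable]: "drift m \<in> borel_measurable history_space"
  by (intro measurable_history_space_if_slices lyapunov_slice_measurable)+

lemma lyapunov_step:
  assumes "length (snd h) = m"
  shows "next_mean (lyapunov (Suc m)) h
    \<le> (1 + 6 * L * (gam (Suc m))\<^sup>2) * lyapunov m h
      + 3 * ((1 / real N) * (\<Sum>k = 1..N. (norm (G k xstar))\<^sup>2)) * (gam (Suc m))\<^sup>2 - drift m h"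
proof -
  obtain z l where h: "h = (z, l)" and l: "length l = m"
    using assms by (cases h) auto
  have "gam (Suc (Suc m)) \<le> gam (Suc m)" "0 < gam (Suc (Suc m))" "0 < gam (Suc m)"
    using gam_decr[of "Suc m"] gam_pos[of "Suc m"] gam_pos[of "Suc (Suc m)"] by auto
  then show ?thesis
    using saga_lyapunov_step[where \<gamma>="gam (Suc m)" and \<gamma>'="gam (Suc (Suc m))"
        and g="snd (state m (z, l))", OF N_ge_1 lam crit A3 L]
    by (simp add: h next_mean_def lyapunov_def drift_def state_snoc[OF l] Let_def)
qed

lemma integrable_lyapunov_0: "integrable M (\<lambda>\<omega>. lyapunov 0 (history 0 \<omega>))"
proof (rule Bochner_Integration.integrable_bound)
  define c where "c = 3 * real N * (gam (Suc 0))\<^sup>2 * L"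
  have "0 \<le> c"
    using L by (simp add: c_def)
  show "integrable M (\<lambda>\<omega>. 2 * (norm (snd (X \<omega>)))\<^sup>2 + 2 * (norm xstar)\<^sup>2
      + c * (2 * (norm (fst (X \<omega>)))\<^sup>2 + 2 * (norm xstar)\<^sup>2))"
    using X_integrable by simp
  have "lyapunov 0 (history 0 \<omega>)
      \<le> (norm (snd (X \<omega>) - xstar))\<^sup>2 + c * (norm (fst (X \<omega>) - xstar))\<^sup>2" for \<omega>
    using memory_error_gradients_le[OF A3, of "fst (X \<omega>)"]
    by (simp add: lyapunov_def history_def state_0 c_def mult_left_mono)
  also have "\<dots> \<omega> \<le> 2 * (norm (snd (X \<omega>)))\<^sup>2 + 2 * (norm xstar)\<^sup>2
      + c * (2 * (norm (fst (X \<omega>)))\<^sup>2 + 2 * (norm xstar)\<^sup>2)" for \<omega>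
    by (intro add_mono norm_diff_power2_le mult_left_mono \<open>0 \<le> c\<close>)
  finally show "AE \<omega> in M. norm (lyapunov 0 (history 0 \<omega>)) \<le> norm (2 * (norm (snd (X \<omega>)))\<^sup>2
      + 2 * (norm xstar)\<^sup>2 + c * (2 * (norm (fst (X \<omega>)))\<^sup>2 + 2 * (norm xstar)\<^sup>2))"
    using lyapunov_nonneg by (intro AE_I2) (auto intro: order.trans[OF _ abs_ge_self])
qed simp

theorem AE_lyapunov_convergent_drift_summable:
  "AE \<omega> in M. convergent (\<lambda>m. lyapunov m (history m \<omega>)) \<and> summable (\<lambda>m. drift m (history m \<omega>))"
proof -
  have "summable (\<lambda>m. (gam (Suc m))\<^sup>2)"
    using gam_sq summable_Suc_iff[of "\<lambda>n. (gam n)\<^sup>2"] by simp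
  then have summable_a: "summable (\<lambda>m. 6 * L * (gam (Suc m))\<^sup>2)"
    and summable_b: "summable (\<lambda>m. 3 * ((1 / real N) * (\<Sum>k = 1..N. (norm (G k xstar))\<^sup>2)) * (gam (Suc m))\<^sup>2)"
    by (rule summable_mult)+
  show ?thesis
    by (rule robbins_siegmund[OF lyapunov_measurable drift_measurable lyapunov_nonneg drift_nonneg _ _
          summable_a summable_b lyapunov_step integrable_lyapunov_0]) (use L in \<open>simp_all add: sum_nonneg\<close>)
qed

end

theorem theorem1:
  fixes M :: "'a measure"
    and N :: nat
    and F :: "nat \<Rightarrow> 'v::euclidean_space \<Rightarrow> real"
    and G :: "nat \<Rightarrow> 'v \<Rightarrow> 'v"
    and lam :: real
    and gam :: "nat \<Rightarrow> real"
    and X0 X1 :: "'a \<Rightarrow> 'v"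
    and U :: "nat \<Rightarrow> 'a \<Rightarrow> nat"
    and xstar :: 'v
    and L :: real
  assumes M: "prob_space M"
    and N: "N \<ge> 1"
    and grad: "\<And>k x. k \<in> {1..N} \<Longrightarrow> (F k has_derivative (\<lambda>h. G k x \<bullet> h)) (at x)"
    and lam: "0 \<le> lam" "lam \<le> 1"
    and gam_pos: "\<And>n. n \<ge> 1 \<Longrightarrow> gam n > 0"
    and gam_decr: "\<And>n. n \<ge> 1 \<Longrightarrow> gam (Suc n) \<le> gam n"
    and gam_lim: "gam \<longlonglongrightarrow> 0"
    and gam_sum: "\<not> summable gam"
    and gam_sq: "summable (\<lambda>n. (gam n)\<^sup>2)"
    and X0: "X0 \<in> borel_measurable M" "integrable M (\<lambda>\<omega>. (norm (X0 \<omega>))\<^sup>2)"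
    and X1: "X1 \<in> borel_measurable M" "integrable M (\<lambda>\<omega>. (norm (X1 \<omega>))\<^sup>2)"
    and U_meas: "\<And>n. n \<ge> 2 \<Longrightarrow> U n \<in> measurable M (count_space UNIV)"
    and U_unif: "\<And>n. n \<ge> 2 \<Longrightarrow>
                   distr M (count_space UNIV) (U n) = measure_pmf (pmf_of_set {1..N})"
    and U_indep: "prob_space.indep_vars M (\<lambda>_. count_space UNIV) U {2..}"
    and X_U_indep: "prob_space.indep_set M
                      (sets (vimage_algebra (space M) (\<lambda>\<omega>. (X0 \<omega>, X1 \<omega>)) borel))
                      (sets (vimage_algebra (space M) (\<lambda>\<omega>. restrict (\<lambda>n. U n \<omega>) {2::nat..})
                                (PiM {2..} (\<lambda>_. count_space UNIV))))"
    and A1_cont: "continuous_on UNIV (avg_fun N G)"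
    and A1_crit: "avg_fun N G xstar = 0"
    and A1_uniq: "\<And>x. avg_fun N G x = 0 \<Longrightarrow> x = xstar"
    and A2: "\<And>x. x \<noteq> xstar \<Longrightarrow> (x - xstar) \<bullet> avg_fun N G x > 0"
    and L: "L > 0"
    and A3: "\<And>x. (1 / real N) * (\<Sum>k = 1..N. (norm (G k x - G k xstar))\<^sup>2) \<le> L * (norm (x - xstar))\<^sup>2"
  shows "(AE \<omega> in M. (\<lambda>n. saga_X N G lam gam (X0 \<omega>) (X1 \<omega>) (\<lambda>n. U n \<omega>) n) \<longlonglongrightarrow> xstar)
       \<and> (AE \<omega> in M. (\<lambda>n. avg_fun N F (saga_X N G lam gam (X0 \<omega>) (X1 \<omega>) (\<lambda>n. U n \<omega>) n))
                        \<longlonglongrightarrow> avg_fun N F xstar)"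
proof -
  have G_measurable: "G k \<in> borel_measurable borel" if "k \<in> {1..N}" for k
    using grad[OF that] by (rule borel_measurable_gradient)
  have "(\<lambda>\<omega>. (X0 \<omega>, X1 \<omega>)) \<in> borel_measurable M"
    using measurable_Pair[OF X0(1) X1(1)] by (simp add: borel_prod)
  then interpret saga_iteration M N "\<lambda>\<omega>. (X0 \<omega>, X1 \<omega>)" U G lam gam xstar L
    using M N U_meas U_unif U_indep X_U_indep G_measurable lam gam_pos gam_decr gam_sq A1_crit A2 L A3
      X0(2) X1(2)
    by (intro saga_iteration.intro random_index_history.intro random_index_history_axioms.intro
        saga_iteration_axioms.intro) simp_all
  have X_lim: "AE \<omega> in M. (\<lambda>n. saga_X N G lam gam (X0 \<omega>) (X1 \<omega>) (\<lambda>n. U n \<omega>) n) \<longlonglongrightarrow> xstar"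
    using AE_U_in_range AE_lyapunov_convergent_drift_summable
  proof eventually_elim
    case (elim \<omega>)
    have "saga_state N G lam gam (X0 \<omega>) (X1 \<omega>) (\<lambda>n. U n \<omega>) m = state m (history m \<omega>)" for m
      using saga_state_eq_state_history[OF elim(1)] by simp
    then have "(\<lambda>m. fst (saga_state N G lam gam (X0 \<omega>) (X1 \<omega>) (\<lambda>n. U n \<omega>) m)) \<longlonglongrightarrow> xstar"
      using elim(2) L by (intro saga_state_tendsto[OF A3 _ A1_cont A2 gam_pos gam_lim gam_sum])
        (simp_all add: lyapunov_def drift_def)
    then have "(\<lambda>m. saga_X N G lam gam (X0 \<omega>) (X1 \<omega>) (\<lambda>n. U n \<omega>) (Suc m)) \<longlonglongrightarrow> xstar"
      by (simp add: saga_X_def)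
    then show ?case
      by (rule LIMSEQ_imp_Suc)
  qed
  have cont: "isCont (avg_fun N F) xstar"
  proof -
    have "isCont (\<lambda>x. (1 / real N) *\<^sub>R (\<Sum>k = 1..N. F k x)) xstar"
      using has_derivative_continuous[OF grad] by (intro continuous_intros) auto
    then show ?thesis
      by (simp add: avg_fun_def[abs_def])
  qed
  from X_lim have "AE \<omega> in M. (\<lambda>n. avg_fun N F (saga_X N G lam gam (X0 \<omega>) (X1 \<omega>) (\<lambda>n. U n \<omega>) n))
      \<longlonglongrightarrow> avg_fun N F xstar"
    by eventually_elim (rule isCont_tendsto_compose[OF cont])
  with X_lim show ?thesis
    by blast
qed

end
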